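(* Let $m\ge4$, let $\mathcal W_1$ be an $m\times m$ quadrilateral labyrinth set in $Q$, and let $L_\infty$ be the associated quadrilateral labyrinth fractal. Then $Q\setminus L_\infty$ is not path connected.
   Context: Let $Q$ be a convex quadrilateral in $\mathbb{R}^2$. Divide $Q$ into two triangles by its shorter diagonal (either diagonal if they have equal length). Label the vertices $Q_1,Q_2,Q_3,Q_4$ anticlockwise, starting at an endpoint of that diagonal, so that the diagonal is $Q_1Q_3$. Let $\Delta_1$ be the closed triangle $Q_1Q_2Q_3$ and $\Delta_2$ the closed triangle $Q_3Q_4Q_1$. Every $x\in Q$ has a unique representation $x=\sum_{i=1}^4\alpha_iQ_i$, defined as follows. If $x\in\Delta_1$, then $\alpha_4=0$ and $(\alpha_1,\alpha_2,\alpha_3)$ are the barycentric coordinates of $x$ in $\Delta_1$. If $x\in\Delta_2$, then $\alpha_2=0$ and $(\alpha_1,\alpha_3,\alpha_4)$ are the barycentric coordinates of $x$ in $\Delta_2$. For an ordered quadruple $V=(V_1,\dots,V_4)$ define $P_V:Q\to\mathbb{R}^2$ by $P_V(x)=\sum_i\alpha_iV_i$. For an integer $m\ge2$, define the following index sets: - $A_1=\{(k_1,k_2,k_3,0)\in\mathbb{Z}_{\ge0}^4:k_1+k_2+k_3=m-1,\ k_2\ne0\}$, - $A_2=\{(k_1,0,k_3,k_4)\in\mathbb{Z}_{\ge0}^4:k_1+k_3+k_4=m-1,\ k_4\ne0\}$, - $A_3=\{(k_1,0,k_3,0)\in\mathbb{Z}_{\ge0}^4:k_1+k_3=m-1\}$,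 - $A=A_1\cup A_2\cup A_3$. For $k\in A$, let $S_m(k)$ be the quadrilateral with ordered vertices $R_1R_2R_3R_4$ given below. - If $k\in A_1$: $R_1=\frac{(k_1+1)Q_1+k_2Q_2+k_3Q_3}{m}$, $R_2=\frac{k_1Q_1+(k_2+1)Q_2+k_3Q_3}{m}$, $R_3=\frac{k_1Q_1+k_2Q_2+(k_3+1)Q_3}{m}$, $R_4=\frac{(k_1+1)Q_1+(k_2-1)Q_2+(k_3+1)Q_3}{m}$. - If $k\in A_2$: $R_1=\frac{(k_1+1)Q_1+k_3Q_3+k_4Q_4}{m}$, $R_2=\frac{(k_1+1)Q_1+(k_3+1)Q_3+(k_4-1)Q_4}{m}$, $R_3=\frac{k_1Q_1+(k_3+1)Q_3+k_4Q_4}{m}$, $R_4=\frac{k_1Q_1+k_3Q_3+(k_4+1)Q_4}{m}$. - If $k\in A_3$: $R_1=\frac{(k_1+1)Q_1+k_3Q_3}{m}$, $R_2=\frac{k_1Q_1+Q_2+k_3Q_3}{m}$, $R_3=\frac{k_1Q_1+(k_3+1)Q_3}{m}$, $R_4=\frac{k_1Q_1+k_3Q_3+Q_4}{m}$. Let $\mathcal S_m=\{S_m(k):k\in A\}$. For $\mathcal W\subseteq\mathcal S_m$, the graph $\mathcal G(\mathcal W)$ has vertex set $\mathcal W$, with two elements adjacent iff they have a common side. An $m\times m$ quadrilateral labyrinth set ($m\ge4$) is a set $\mathcal W_1\subseteq\mathcal S_m$ satisfying three properties. (1) Tree property: $\mathcal G(\mathcal W_1)$ is a tree. (2) Exit property: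 there is exactly one $(k_1,k_2,0,0)\in A$ with $S_m(k_1,k_2,0,0)\in\mathcal W_1$ and $S_m(0,0,k_2,k_1)\in\mathcal W_1$. There is also exactly one $(k_1,0,0,k_4)\in A$ with $S_m(k_1,0,0,k_4)\in\mathcal W_1$ and $S_m(0,k_1,k_4,0)\in\mathcal W_1$. (3) Corner property: $\mathcal W_1$ contains at most one element of $\{S_m(m-1,0,0,0),S_m(0,0,m-1,0)\}$ and at most one element of $\{S_m(0,m-1,0,0),S_m(0,0,0,m-1)\}$. Define recursively for $n\ge2$: $\mathcal W_n=\{P_{W}(W'):W'\in\mathcal W_1,\ W\in\mathcal W_{n-1}\}$. Here $P_W(W')$ is the quadrilateral whose ordered vertices are the images under $P_W$ of the ordered vertices of $W'$. Let $L_n=\bigcup_{W\in\mathcal W_n}W$ (closed regions) and $L_\infty=\bigcap_{n\ge1}L_n$. *)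

theory Defs
  imports "HOL-Analysis.Analysis"
begin

type_synonym pt = "real \<times> real"
type_synonym quad = "pt \<times> pt \<times> pt \<times> pt"
type_synonym idx = "nat \<times> nat \<times> nat \<times> nat"

definition cross2 :: "pt \<Rightarrow> pt \<Rightarrow> real" where
  "cross2 a b = fst a * snd b - snd a * fst b"

definition left_turn :: "pt \<Rightarrow> pt \<Rightarrow> pt \<Rightarrow> bool" where
  "left_turn a b c \<longleftrightarrow> cross2 (b - a) (c - b) > 0"

definition convex_quad_acw :: "pt \<Rightarrow> pt \<Rightarrow> pt \<Rightarrow> pt \<Rightarrow> bool" where
  "convex_quad_acw Q1 Q2 Q3 Q4 \<longleftrightarrow>
     left_turn Q1 Q2 Q3 \<and> left_turn Q2 Q3 Q4 \<and> left_turn Q3 Q4 Q1 \<and> left_turn Q4 Q1 Q2"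

definition bary3 :: "pt \<Rightarrow> pt \<Rightarrow> pt \<Rightarrow> pt \<Rightarrow> real \<times> real \<times> real" where
  "bary3 a b c x = (THE (\<alpha>, \<beta>, \<gamma>). \<alpha> + \<beta> + \<gamma> = 1 \<and> x = \<alpha> *\<^sub>R a + \<beta> *\<^sub>R b + \<gamma> *\<^sub>R c)"

definition Pmap :: "quad \<Rightarrow> quad \<Rightarrow> pt \<Rightarrow> pt" where
  "Pmap q V x = (case q of (Q1, Q2, Q3, Q4) \<Rightarrow> case V of (V1, V2, V3, V4) \<Rightarrow>
     if x \<in> convex hull {Q1, Q2, Q3}
     then (case bary3 Q1 Q2 Q3 x of (a1, a2, a3) \<Rightarrow> a1 *\<^sub>R V1 + a2 *\<^sub>R V2 + a3 *\<^sub>R V3)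
     else (case bary3 Q1 Q3 Q4 x of (a1, a3, a4) \<Rightarrow> a1 *\<^sub>R V1 + a3 *\<^sub>R V3 + a4 *\<^sub>R V4))"

definition map_quad :: "(pt \<Rightarrow> pt) \<Rightarrow> quad \<Rightarrow> quad" where
  "map_quad f V = (case V of (V1, V2, V3, V4) \<Rightarrow> (f V1, f V2, f V3, f V4))"

text \<open>The closed region bounded by the quadrilateral V1V2V3V4 (whose diagonal V1V3 is interior),
  i.e. the union of the triangles V1V2V3 and V3V4V1.\<close>
definition quad_region :: "quad \<Rightarrow> pt set" where
  "quad_region V = (case V of (V1, V2, V3, V4) \<Rightarrow>
     convex hull {V1, V2, V3} \<union> convex hull {V3, V4, V1})"

definition quad_sides :: "quad \<Rightarrow> pt set set" where
  "quad_sides V = (case V of (V1, V2, V3, V4) \<Rightarrow>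
     {closed_segment V1 V2, closed_segment V2 V3, closed_segment V3 V4, closed_segment V4 V1})"

definition quad_adj :: "quad \<Rightarrow> quad \<Rightarrow> bool" where
  "quad_adj W W' \<longleftrightarrow> W \<noteq> W' \<and> quad_sides W \<inter> quad_sides W' \<noteq> {}"

definition graph_connected :: "'a set \<Rightarrow> ('a \<Rightarrow> 'a \<Rightarrow> bool) \<Rightarrow> bool" where
  "graph_connected V E \<longleftrightarrow>
     (\<forall>u\<in>V. \<forall>v\<in>V. (\<lambda>x y. x \<in> V \<and> y \<in> V \<and> E x y)\<^sup>*\<^sup>* u v)"

definition graph_has_cycle :: "'a set \<Rightarrow> ('a \<Rightarrow> 'a \<Rightarrow> bool) \<Rightarrow> bool" where
  "graph_has_cycle V E \<longleftrightarrow>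
     (\<exists>cs. 3 \<le> length cs \<and> distinct cs \<and> set cs \<subseteq> V \<and>
        (\<forall>i < length cs. E (cs ! i) (cs ! ((i + 1) mod length cs))))"

definition is_tree :: "'a set \<Rightarrow> ('a \<Rightarrow> 'a \<Rightarrow> bool) \<Rightarrow> bool" where
  "is_tree V E \<longleftrightarrow> finite V \<and> V \<noteq> {} \<and> graph_connected V E \<and> \<not> graph_has_cycle V E"

definition A1 :: "nat \<Rightarrow> idx set" where
  "A1 m = {(k1, k2, k3, k4). k4 = 0 \<and> k1 + k2 + k3 = m - 1 \<and> k2 \<noteq> 0}"
definition A2 :: "nat \<Rightarrow> idx set" where
  "A2 m = {(k1, k2, k3, k4). k2 = 0 \<and> k1 + k3 + k4 = m - 1 \<and> k4 \<noteq> 0}"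
definition A3 :: "nat \<Rightarrow> idx set" where
  "A3 m = {(k1, k2, k3, k4). k2 = 0 \<and> k4 = 0 \<and> k1 + k3 = m - 1}"
definition Aidx :: "nat \<Rightarrow> idx set" where
  "Aidx m = A1 m \<union> A2 m \<union> A3 m"

definition Sm :: "quad \<Rightarrow> nat \<Rightarrow> idx \<Rightarrow> quad" where
  "Sm q m k = (case q of (Q1, Q2, Q3, Q4) \<Rightarrow> case k of (k1, k2, k3, k4) \<Rightarrow>
     let c = (\<lambda>a b c d. (1 / real m) *\<^sub>R (a *\<^sub>R Q1 + b *\<^sub>R Q2 + c *\<^sub>R Q3 + d *\<^sub>R Q4));
         x1 = real k1; x2 = real k2; x3 = real k3; x4 = real k4 in
     if k \<in> A1 m then
       (c (x1+1) x2 x3 0, c x1 (x2+1) x3 0, c x1 x2 (x3+1) 0, c (x1+1) (x2-1) (x3+1) 0)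
     else if k \<in> A2 m then
       (c (x1+1) 0 x3 x4, c (x1+1) 0 (x3+1) (x4-1), c x1 0 (x3+1) x4, c x1 0 x3 (x4+1))
     else if k \<in> A3 m then
       (c (x1+1) 0 x3 0, c x1 1 x3 0, c x1 0 (x3+1) 0, c x1 0 x3 1)
     else undefined)"

definition Sset :: "quad \<Rightarrow> nat \<Rightarrow> quad set" where
  "Sset q m = Sm q m ` Aidx m"

definition exit_property :: "quad \<Rightarrow> nat \<Rightarrow> quad set \<Rightarrow> bool" where
  "exit_property q m W \<longleftrightarrow>
     (\<exists>!(k1, k2). (k1, k2, 0, 0) \<in> Aidx m \<and> Sm q m (k1, k2, 0, 0) \<in> W \<and> Sm q m (0, 0, k2, k1) \<in> W) \<and>
     (\<exists>!(k1, k4). (k1, 0, 0, k4) \<in> Aidx m \<and> Sm q m (k1, 0, 0, k4) \<in> W \<and> Sm q m (0, k1, k4, 0) \<in> W)"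

definition corner_property :: "quad \<Rightarrow> nat \<Rightarrow> quad set \<Rightarrow> bool" where
  "corner_property q m W \<longleftrightarrow>
     \<not> (Sm q m (m - 1, 0, 0, 0) \<in> W \<and> Sm q m (0, 0, m - 1, 0) \<in> W) \<and>
     \<not> (Sm q m (0, m - 1, 0, 0) \<in> W \<and> Sm q m (0, 0, 0, m - 1) \<in> W)"

definition labyrinth_set :: "quad \<Rightarrow> nat \<Rightarrow> quad set \<Rightarrow> bool" where
  "labyrinth_set q m W \<longleftrightarrow> 4 \<le> m \<and> W \<subseteq> Sset q m \<and> is_tree W quad_adj \<and>
     exit_property q m W \<and> corner_property q m W"

text \<open>lab_level q W1 n is the set W_{n+1}.\<close>
fun lab_level :: "quad \<Rightarrow> quad set \<Rightarrow> nat \<Rightarrow> quad set" where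
  "lab_level q W1 0 = W1"
| "lab_level q W1 (Suc n) = {map_quad (Pmap q W) W' | W W'. W' \<in> W1 \<and> W \<in> lab_level q W1 n}"

definition lab_fractal :: "quad \<Rightarrow> quad set \<Rightarrow> pt set" where
  "lab_fractal q W1 = (\<Inter>n. \<Union>W \<in> lab_level q W1 n. quad_region W)"

end

theory Submission
  imports Defs
begin

(* The corner property leaves one of Q1, Q3 and one of Q2, Q4 outside the first level L_1,
   hence outside L_inf. A path joining them in Q - L_inf has compact image, so it already
   misses some level L_n. But every level contains a path-connected set that meets the
   sides Q1Q2 and Q4Q3, and the sides Q1Q4 and Q2Q3, at corresponding points: the maps P_V
   of the cells V of W_1 carry such a set into L_{n+1}, the tree property glues the images
   across common sides, and the exit cells carry the side points to side points. Transported
   to the unit square by the piecewise affine chart P_Q, the Fashoda meet theorem makes the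
   corner path cross that set, a contradiction. *)

section \<open>Oriented area and barycentric coordinates\<close>

definition orient :: "pt \<Rightarrow> pt \<Rightarrow> pt \<Rightarrow> real" where
  "orient a b c = cross2 (b - a) (c - a)"

lemma orient_eq:
  "orient a b c = (fst b - fst a) * (snd c - snd a) - (snd b - snd a) * (fst c - fst a)"
  by (simp add: orient_def cross2_def)

lemma orient_rotate: "orient b c a = orient a b c"
  by (simp add: orient_eq algebra_simps)

lemma orient_same [simp]: "orient a b a = 0" "orient a b b = 0" "orient a a b = 0"
  by (simp_all add: orient_eq)

lemma left_turn_iff_orient: "left_turn a b c \<longleftrightarrow> 0 < orient a b c"
  by (simp add: left_turn_def orient_eq cross2_def algebra_simps)

lemma orient_affine:
  "u + v + w = 1 \<Longrightarrow>
   orient a b (u *\<^sub>R x + v *\<^sub>R y + w *\<^sub>R z) = u * orient a b x + v * orient a b y + w * orient a b z"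
  unfolding orient_eq by simp algebra

lemma convex_orient_le: "convex {y. orient a b y \<le> M}"
proof (rule convexI)
  fix x y and u v :: real
  assume "x \<in> {y. orient a b y \<le> M}" "y \<in> {y. orient a b y \<le> M}" "0 \<le> u" "0 \<le> v" "u + v = 1"
  then have "u * orient a b x + v * orient a b y \<le> u * M + v * M"
    by (intro add_mono mult_left_mono) auto
  moreover have "orient a b (u *\<^sub>R x + v *\<^sub>R y) = u * orient a b x + v * orient a b y"
    using orient_affine[of u v 0 a b x y x] \<open>u + v = 1\<close> by simp
  ultimately show "u *\<^sub>R x + v *\<^sub>R y \<in> {y. orient a b y \<le> M}"
    using \<open>u + v = 1\<close> by (simp flip: distrib_right)
qed

lemma quad_region_orient_le:
  assumes "\<forall>v\<in>{R1, R2, R3, R4}. orient a b v \<le> M"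
  shows "quad_region (R1, R2, R3, R4) \<subseteq> {y. orient a b y \<le> M}"
proof -
  have "convex hull {R1, R2, R3} \<subseteq> {y. orient a b y \<le> M}" "convex hull {R3, R4, R1} \<subseteq> {y. orient a b y \<le> M}"
    by (intro hull_minimal convex_orient_le; use assms in auto)+
  then show ?thesis unfolding quad_region_def by simp
qed

lemma orient_bary:
  assumes "u + v + w = 1" "x = u *\<^sub>R a + v *\<^sub>R b + w *\<^sub>R c"
  shows "orient x b c = u * orient a b c" "orient a x c = v * orient a b c"
    "orient a b x = w * orient a b c"
proof -
  have "orient b c x = u * orient b c a" "orient c a x = v * orient c a b" "orient a b x = w * orient a b c"
    using orient_affine[OF assms(1)] assms(2) by simp_all
  then show "orient x b c = u * orient a b c" "orient a x c = v * orient a b c"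
    "orient a b x = w * orient a b c"
    by (metis orient_rotate)+
qed

lemma orient_cramer:
  assumes "orient a b c \<noteq> 0"
  shows "x = (orient x b c / orient a b c) *\<^sub>R a + (orient a x c / orient a b c) *\<^sub>R b
      + (orient a b x / orient a b c) *\<^sub>R c"
    and "orient x b c / orient a b c + orient a x c / orient a b c + orient a b x / orient a b c = 1"
proof -
  have "orient a b c *\<^sub>R x = orient x b c *\<^sub>R a + orient a x c *\<^sub>R b + orient a b x *\<^sub>R c"
    by (simp add: prod_eq_iff orient_eq) algebra
  moreover have "x = (1 / orient a b c) *\<^sub>R (orient a b c *\<^sub>R x)"
    using assms by simp
  ultimately show "x = (orient x b c / orient a b c) *\<^sub>R a + (orient a x c / orient a b c) *\<^sub>R b
      + (orient a b x / orient a b c) *\<^sub>R c"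
    by (simp add: scaleR_add_right)
  have "orient x b c + orient a x c + orient a b x = orient a b c"
    by (simp add: orient_eq) algebra
  then show "orient x b c / orient a b c + orient a x c / orient a b c + orient a b x / orient a b c = 1"
    using assms by (simp add: add_divide_distrib[symmetric])
qed

lemma bary3_orient:
  assumes "orient a b c \<noteq> 0"
  shows "bary3 a b c x = (orient x b c / orient a b c, orient a x c / orient a b c, orient a b x / orient a b c)"
  unfolding bary3_def
proof (rule the_equality)
  fix p assume "case p of (u, v, w) \<Rightarrow> u + v + w = 1 \<and> x = u *\<^sub>R a + v *\<^sub>R b + w *\<^sub>R c"
  then show "p = (orient x b c / orient a b c, orient a x c / orient a b c, orient a b x / orient a b c)"
    using orient_bary assms by (auto split: prod.splits)
qed (use orient_cramer[OF assms] in auto)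

lemma bary3_eq:
  assumes "orient a b c \<noteq> 0" "u + v + w = 1"
  shows "bary3 a b c (u *\<^sub>R a + v *\<^sub>R b + w *\<^sub>R c) = (u, v, w)"
  using assms by (simp add: bary3_orient orient_bary[OF assms(2) refl])

lemma bary_coords_unique:
  assumes "orient a b c \<noteq> 0" "u + v + w = 1" "u' + v' + w' = 1"
    "u *\<^sub>R a + v *\<^sub>R b + w *\<^sub>R c = u' *\<^sub>R a + v' *\<^sub>R b + w' *\<^sub>R c"
  shows "u = u'" "v = v'" "w = w'"
proof -
  have "(u, v, w) = (u', v', w')"
    using bary3_eq[OF assms(1,2)] bary3_eq[OF assms(1,3)] assms(4) by metis
  then show "u = u'" "v = v'" "w = w'" by simp_all
qed

lemma mem_convex_hull_3_orient:
  assumes "0 < orient a b c"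
  shows "x \<in> convex hull {a, b, c} \<longleftrightarrow> 0 \<le> orient b c x \<and> 0 \<le> orient c a x \<and> 0 \<le> orient a b x"
proof -
  have "x \<in> convex hull {a, b, c} \<longleftrightarrow> 0 \<le> orient x b c \<and> 0 \<le> orient a x c \<and> 0 \<le> orient a b x"
  proof
    assume "x \<in> convex hull {a, b, c}"
    then obtain u v w where "0 \<le> u" "0 \<le> v" "0 \<le> w" "u + v + w = 1" "x = u *\<^sub>R a + v *\<^sub>R b + w *\<^sub>R c"
      unfolding convex_hull_3 by blast
    then show "0 \<le> orient x b c \<and> 0 \<le> orient a x c \<and> 0 \<le> orient a b x"
      using orient_bary assms by simp
  next
    assume "0 \<le> orient x b c \<and> 0 \<le> orient a x c \<and> 0 \<le> orient a b x"
    then show "x \<in> convex hull {a, b, c}"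
      using orient_cramer[of a b c x] assms unfolding convex_hull_3 by force
  qed
  then show ?thesis by (metis orient_rotate)
qed

lemma continuous_on_orient [continuous_intros]:
  "continuous_on S f \<Longrightarrow> continuous_on S g \<Longrightarrow> continuous_on S h \<Longrightarrow>
   continuous_on S (\<lambda>x. orient (f x) (g x) (h x))"
  unfolding orient_eq by (intro continuous_intros)

lemma continuous_on_bary3_comb:
  fixes p r s :: pt
  assumes "orient a b c \<noteq> 0"
  shows "continuous_on S (\<lambda>x. case bary3 a b c x of (u, v, w) \<Rightarrow> u *\<^sub>R p + v *\<^sub>R r + w *\<^sub>R s)"
  unfolding bary3_orient[OF assms] prod.case
  by (intro continuous_intros) (use assms in auto)

section \<open>The maps P_V\<close>

type_synonym coef = "real \<times> real \<times> real \<times> real"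

definition qcomb :: "coef \<Rightarrow> quad \<Rightarrow> pt" where
  "qcomb \<alpha> V = (case \<alpha> of (a, b, c, d) \<Rightarrow> case V of (V1, V2, V3, V4) \<Rightarrow>
     a *\<^sub>R V1 + b *\<^sub>R V2 + c *\<^sub>R V3 + d *\<^sub>R V4)"

lemma qcomb_simp [simp]:
  "qcomb (a, b, c, d) (V1, V2, V3, V4) = a *\<^sub>R V1 + b *\<^sub>R V2 + c *\<^sub>R V3 + d *\<^sub>R V4"
  by (simp add: qcomb_def)

lemma qcomb_add: "qcomb (\<alpha> + \<beta>) V = qcomb \<alpha> V + qcomb \<beta> V"
  by (cases \<alpha> rule: prod_cases4; cases \<beta> rule: prod_cases4; cases V rule: prod_cases4)
    (simp add: scaleR_add_left)

lemma qcomb_scaleR: "qcomb (r *\<^sub>R \<alpha>) V = r *\<^sub>R qcomb \<alpha> V"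
  by (cases \<alpha> rule: prod_cases4; cases V rule: prod_cases4) (simp add: scaleR_add_right)

lemma orient_qcomb:
  "a + b + c + d = 1 \<Longrightarrow> orient P R (qcomb (a, b, c, d) (V1, V2, V3, V4)) =
     a * orient P R V1 + b * orient P R V2 + c * orient P R V3 + d * orient P R V4"
  unfolding orient_eq by simp algebra

definition half1_coefs :: "coef set" where
  "half1_coefs = {(a, b, c, 0) | a b c. 0 \<le> a \<and> 0 \<le> b \<and> 0 \<le> c \<and> a + b + c = 1}"

definition half2_coefs :: "coef set" where
  "half2_coefs = {(a, 0, c, d) | a c d. 0 \<le> a \<and> 0 \<le> c \<and> 0 \<le> d \<and> a + c + d = 1}"

lemma convex_half1_coefs: "convex half1_coefs"
  unfolding convex_def half1_coefs_def by (clarsimp; algebra)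

lemma convex_half2_coefs: "convex half2_coefs"
  unfolding convex_def half2_coefs_def by (clarsimp; algebra)

lemma qcomb_image_half1: "(\<lambda>\<alpha>. qcomb \<alpha> (V1, V2, V3, V4)) ` half1_coefs = convex hull {V1, V2, V3}"
  unfolding convex_hull_3 half1_coefs_def by force

lemma qcomb_image_half2: "(\<lambda>\<alpha>. qcomb \<alpha> (V1, V2, V3, V4)) ` half2_coefs = convex hull {V1, V3, V4}"
  unfolding convex_hull_3 half2_coefs_def by force

locale convex_quad =
  fixes Q1 Q2 Q3 Q4 :: pt
  assumes acw: "convex_quad_acw Q1 Q2 Q3 Q4"
begin

abbreviation "q \<equiv> (Q1, Q2, Q3, Q4)"
abbreviation "T1 \<equiv> convex hull {Q1, Q2, Q3}"
abbreviation "T2 \<equiv> convex hull {Q1, Q3, Q4}"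
abbreviation "Qhull \<equiv> convex hull {Q1, Q2, Q3, Q4}"

lemma orient_pos:
  "0 < orient Q1 Q2 Q3" "0 < orient Q1 Q3 Q4" "0 < orient Q1 Q2 Q4" "0 < orient Q2 Q3 Q4"
  using acw orient_rotate[of Q3 Q4 Q1] orient_rotate[of Q4 Q1 Q2] orient_rotate[of Q1 Q2 Q4]
  unfolding convex_quad_acw_def left_turn_iff_orient by auto

lemma orient_normalise:
  "orient Q1 Q3 Q2 = - orient Q1 Q2 Q3" "orient Q2 Q1 Q3 = - orient Q1 Q2 Q3"
  "orient Q2 Q3 Q1 = orient Q1 Q2 Q3" "orient Q3 Q1 Q2 = orient Q1 Q2 Q3"
  "orient Q3 Q2 Q1 = - orient Q1 Q2 Q3" "orient Q1 Q4 Q3 = - orient Q1 Q3 Q4"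
  "orient Q3 Q1 Q4 = - orient Q1 Q3 Q4" "orient Q3 Q4 Q1 = orient Q1 Q3 Q4"
  "orient Q4 Q1 Q3 = orient Q1 Q3 Q4" "orient Q4 Q3 Q1 = - orient Q1 Q3 Q4"
  "orient Q1 Q4 Q2 = - orient Q1 Q2 Q4" "orient Q2 Q1 Q4 = - orient Q1 Q2 Q4"
  "orient Q2 Q4 Q1 = orient Q1 Q2 Q4" "orient Q4 Q1 Q2 = orient Q1 Q2 Q4"
  "orient Q4 Q2 Q1 = - orient Q1 Q2 Q4" "orient Q2 Q4 Q3 = - orient Q2 Q3 Q4"
  "orient Q3 Q2 Q4 = - orient Q2 Q3 Q4" "orient Q3 Q4 Q2 = orient Q2 Q3 Q4"
  "orient Q4 Q2 Q3 = orient Q2 Q3 Q4" "orient Q4 Q3 Q2 = - orient Q2 Q3 Q4"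
  by (simp_all add: orient_eq algebra_simps)

lemma orient_diagonal:
  "a + b + c + d = 1 \<Longrightarrow>
   orient Q1 Q3 (qcomb (a, b, c, d) q) = d * orient Q1 Q3 Q4 - b * orient Q1 Q2 Q3"
  by (simp add: orient_qcomb orient_normalise del: qcomb_simp)

lemma T1_eq: "T1 = (\<lambda>\<alpha>. qcomb \<alpha> q) ` half1_coefs"
  by (rule qcomb_image_half1[symmetric])

lemma T2_eq: "T2 = (\<lambda>\<alpha>. qcomb \<alpha> q) ` half2_coefs"
  by (rule qcomb_image_half2[symmetric])

lemma qcomb_half1_eq_half2:
  assumes "\<alpha> \<in> half1_coefs" "\<beta> \<in> half2_coefs" "qcomb \<alpha> q = qcomb \<beta> q"
  shows "\<alpha> \<in> half2_coefs" "\<beta> \<in> half1_coefs"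
proof -
  obtain a b c a' c' d' where \<alpha>: "\<alpha> = (a, b, c, 0)" "0 \<le> b" "a + b + c = 1"
    and \<beta>: "\<beta> = (a', 0, c', d')" "0 \<le> d'" "a' + c' + d' = 1"
    using assms(1,2) unfolding half1_coefs_def half2_coefs_def by blast
  have "- b * orient Q1 Q2 Q3 = d' * orient Q1 Q3 Q4"
    using orient_diagonal[of a b c 0] orient_diagonal[of a' 0 c' d'] assms(3) \<alpha> \<beta> by simp
  moreover have "0 \<le> b * orient Q1 Q2 Q3" "0 \<le> d' * orient Q1 Q3 Q4"
    using orient_pos(1,2) \<alpha>(2) \<beta>(2) by simp_all
  ultimately have "b * orient Q1 Q2 Q3 = 0" "d' * orient Q1 Q3 Q4 = 0"
    by linarith+
  then have "b = 0" "d' = 0"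
    using orient_pos(1,2) by simp_all
  then show "\<alpha> \<in> half2_coefs" "\<beta> \<in> half1_coefs"
    using assms(1,2) \<alpha> \<beta> unfolding half1_coefs_def half2_coefs_def by auto
qed

lemma qcomb_inj_on: "inj_on (\<lambda>\<alpha>. qcomb \<alpha> q) (half1_coefs \<union> half2_coefs)"
proof -
  have half1: "\<alpha> = \<beta>" if h: "\<alpha> \<in> half1_coefs" "\<beta> \<in> half1_coefs" "qcomb \<alpha> q = qcomb \<beta> q" for \<alpha> \<beta>
  proof -
    obtain a b c a' b' c' where "\<alpha> = (a, b, c, 0)" "a + b + c = 1" "\<beta> = (a', b', c', 0)" "a' + b' + c' = 1"
      using h(1,2) unfolding half1_coefs_def by blast
    with h(3) show ?thesis
      using bary_coords_unique[of Q1 Q2 Q3 a b c a' b' c'] orient_pos(1) by simp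
  qed
  have half2: "\<alpha> = \<beta>" if h: "\<alpha> \<in> half2_coefs" "\<beta> \<in> half2_coefs" "qcomb \<alpha> q = qcomb \<beta> q" for \<alpha> \<beta>
  proof -
    obtain a c d a' c' d' where "\<alpha> = (a, 0, c, d)" "a + c + d = 1" "\<beta> = (a', 0, c', d')" "a' + c' + d' = 1"
      using h(1,2) unfolding half2_coefs_def by blast
    with h(3) show ?thesis
      using bary_coords_unique[of Q1 Q3 Q4 a c d a' c' d'] orient_pos(2) by simp
  qed
  show ?thesis
  proof (rule inj_onI)
    fix \<alpha> \<beta> assume "\<alpha> \<in> half1_coefs \<union> half2_coefs" "\<beta> \<in> half1_coefs \<union> half2_coefs"
      and eq: "qcomb \<alpha> q = qcomb \<beta> q"
    then consider "\<alpha> \<in> half1_coefs" "\<beta> \<in> half1_coefs" | "\<alpha> \<in> half2_coefs" "\<beta> \<in> half2_coefs"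
      | "\<alpha> \<in> half1_coefs" "\<beta> \<in> half2_coefs" | "\<alpha> \<in> half2_coefs" "\<beta> \<in> half1_coefs"
      by blast
    then show "\<alpha> = \<beta>"
    proof cases
      case 3
      then show ?thesis using half2 qcomb_half1_eq_half2(1) eq by blast
    next
      case 4
      then have "\<alpha> \<in> half1_coefs"
        using qcomb_half1_eq_half2(2) eq by metis
      then show ?thesis using half1 4 eq by blast
    qed (use eq half1 half2 in blast)+
  qed
qed

lemma Pmap_qcomb:
  assumes "\<alpha> \<in> half1_coefs \<union> half2_coefs"
  shows "Pmap q V (qcomb \<alpha> q) = qcomb \<alpha> V"
proof -
  obtain V1 V2 V3 V4 where V: "V = (V1, V2, V3, V4)" by (cases V rule: prod_cases4)
  show ?thesis
  proof (cases "qcomb \<alpha> q \<in> T1")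
    case True
    then obtain \<beta> where "\<beta> \<in> half1_coefs" "qcomb \<alpha> q = qcomb \<beta> q"
      unfolding T1_eq by blast
    moreover from this have "\<alpha> = \<beta>"
      using qcomb_inj_on assms by (auto dest: inj_onD)
    ultimately obtain a b c where "\<alpha> = (a, b, c, 0)" "a + b + c = 1"
      unfolding half1_coefs_def by blast
    with True show ?thesis
      using bary3_eq[of Q1 Q2 Q3 a b c] orient_pos(1) unfolding Pmap_def V by simp
  next
    case False
    then obtain a c d where "\<alpha> = (a, 0, c, d)" "a + c + d = 1"
      using assms T1_eq unfolding half2_coefs_def by blast
    with False show ?thesis
      using bary3_eq[of Q1 Q3 Q4 a c d] orient_pos(2) unfolding Pmap_def V by simp
  qed
qed

lemma qcomb_nonneg_in_halves:
  assumes "0 \<le> a" "0 \<le> b" "0 \<le> c" "0 \<le> d" "a + b + c + d = 1"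
  shows "qcomb (a, b, c, d) q \<in> T1 \<union> T2"
proof -
  let ?x = "qcomb (a, b, c, d) q"
  have o: "orient Q2 Q3 ?x = a * orient Q1 Q2 Q3 + d * orient Q2 Q3 Q4"
    "orient Q3 Q1 ?x = b * orient Q1 Q2 Q3 - d * orient Q1 Q3 Q4"
    "orient Q1 Q2 ?x = c * orient Q1 Q2 Q3 + d * orient Q1 Q2 Q4"
    "orient Q3 Q4 ?x = a * orient Q1 Q3 Q4 + b * orient Q2 Q3 Q4"
    "orient Q4 Q1 ?x = b * orient Q1 Q2 Q4 + c * orient Q1 Q3 Q4"
    "orient Q1 Q3 ?x = d * orient Q1 Q3 Q4 - b * orient Q1 Q2 Q3"
    using orient_qcomb[OF assms(5)] by (simp_all add: orient_normalise del: qcomb_simp)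
  have "0 \<le> a * orient Q1 Q2 Q3 + d * orient Q2 Q3 Q4" "0 \<le> c * orient Q1 Q2 Q3 + d * orient Q1 Q2 Q4"
    "0 \<le> a * orient Q1 Q3 Q4 + b * orient Q2 Q3 Q4" "0 \<le> b * orient Q1 Q2 Q4 + c * orient Q1 Q3 Q4"
    using assms orient_pos by (intro add_nonneg_nonneg mult_nonneg_nonneg; simp)+
  then show ?thesis
    unfolding Un_iff mem_convex_hull_3_orient[OF orient_pos(1)] mem_convex_hull_3_orient[OF orient_pos(2)] o
    by linarith
qed

lemma Qhull_eq: "Qhull = T1 \<union> T2"
proof
  show "T1 \<union> T2 \<subseteq> Qhull" by (intro Un_least hull_mono) auto
next
  show "Qhull \<subseteq> T1 \<union> T2"
  proof
    fix x assume "x \<in> Qhull"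
    then obtain u v y where uv: "0 \<le> u" "0 \<le> v" "u + v = 1" "y \<in> convex hull {Q2, Q3, Q4}"
        "x = u *\<^sub>R Q1 + v *\<^sub>R y"
      using convex_hull_insert[of "{Q2, Q3, Q4}" Q1] by auto
    then obtain b c d where bcd: "0 \<le> b" "0 \<le> c" "0 \<le> d" "b + c + d = 1"
        "y = b *\<^sub>R Q2 + c *\<^sub>R Q3 + d *\<^sub>R Q4"
      unfolding convex_hull_3 by blast
    have "u + v * b + v * c + v * d = 1"
      using uv(3) bcd(4) by (metis add.assoc distrib_left mult.right_neutral)
    moreover have "x = qcomb (u, v * b, v * c, v * d) q"
      using uv(5) bcd(5) by (simp add: scaleR_add_right)
    ultimately show "x \<in> T1 \<union> T2"
      using qcomb_nonneg_in_halves[of u "v * b" "v * c" "v * d"] uv(1,2) bcd(1-3) by (simp del: qcomb_simp)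
  qed
qed

lemma Qhull_qcomb: "Qhull = (\<lambda>\<alpha>. qcomb \<alpha> q) ` (half1_coefs \<union> half2_coefs)"
  unfolding Qhull_eq T1_eq T2_eq by blast

lemma Pmap_on_T2:
  assumes "x \<in> T2"
  shows "Pmap q (V1, V2, V3, V4) x = (case bary3 Q1 Q3 Q4 x of (a, c, d) \<Rightarrow> a *\<^sub>R V1 + c *\<^sub>R V3 + d *\<^sub>R V4)"
proof -
  obtain a c d where "x = qcomb (a, 0, c, d) q" "(a, 0, c, d) \<in> half2_coefs"
    using assms unfolding T2_eq half2_coefs_def by blast
  then show ?thesis
    using Pmap_qcomb[of "(a, 0, c, d)"] bary3_eq[of Q1 Q3 Q4 a c d] orient_pos(2)
    unfolding half2_coefs_def by auto
qed

lemma continuous_on_Pmap: "continuous_on Qhull (Pmap q V)"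
proof -
  obtain V1 V2 V3 V4 where V: "V = (V1, V2, V3, V4)" by (cases V rule: prod_cases4)
  have "continuous_on T1 (Pmap q V)"
    by (rule continuous_on_eq[OF continuous_on_bary3_comb[of Q1 Q2 Q3 _ V1 V2 V3]])
      (use orient_pos(1) in \<open>auto simp: Pmap_def V\<close>)
  moreover have "continuous_on T2 (Pmap q V)"
    by (rule continuous_on_eq[OF continuous_on_bary3_comb[of Q1 Q3 Q4 _ V1 V3 V4]])
      (use orient_pos(2) in \<open>auto simp: Pmap_on_T2 V\<close>)
  ultimately show ?thesis
    unfolding Qhull_eq by (intro continuous_on_closed_Un) (simp_all add: compact_imp_closed compact_convex_hull)
qed

lemma Pmap_image: "Pmap q V ` Qhull = quad_region V"
proof -
  obtain V1 V2 V3 V4 where V: "V = (V1, V2, V3, V4)" by (cases V rule: prod_cases4)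
  have "Pmap q V ` Qhull = (\<lambda>\<alpha>. qcomb \<alpha> V) ` (half1_coefs \<union> half2_coefs)"
    unfolding Qhull_qcomb image_image by (intro image_cong refl Pmap_qcomb)
  also have "\<dots> = convex hull {V1, V2, V3} \<union> convex hull {V1, V3, V4}"
    unfolding image_Un V qcomb_image_half1 qcomb_image_half2 ..
  finally show ?thesis
    unfolding quad_region_def V by (simp add: insert_commute)
qed

lemma Pmap_convex_comb:
  assumes "{y1, y2, y3} \<subseteq> T1 \<or> {y1, y2, y3} \<subseteq> T2" "0 \<le> a" "0 \<le> b" "0 \<le> c" "a + b + c = 1"
  shows "Pmap q V (a *\<^sub>R y1 + b *\<^sub>R y2 + c *\<^sub>R y3) = a *\<^sub>R Pmap q V y1 + b *\<^sub>R Pmap q V y2 + c *\<^sub>R Pmap q V y3"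
proof -
  obtain C where C: "C = half1_coefs \<or> C = half2_coefs" "{y1, y2, y3} \<subseteq> (\<lambda>\<alpha>. qcomb \<alpha> q) ` C"
    using assms(1) unfolding T1_eq T2_eq by blast
  then obtain \<beta>1 \<beta>2 \<beta>3 where \<beta>: "\<beta>1 \<in> C" "\<beta>2 \<in> C" "\<beta>3 \<in> C"
    "y1 = qcomb \<beta>1 q" "y2 = qcomb \<beta>2 q" "y3 = qcomb \<beta>3 q"
    by auto
  have "convex C" using C(1) convex_half1_coefs convex_half2_coefs by blast
  then have "convex hull {\<beta>1, \<beta>2, \<beta>3} \<subseteq> C"
    using \<beta>(1-3) by (simp add: hull_minimal)
  then have "a *\<^sub>R \<beta>1 + b *\<^sub>R \<beta>2 + c *\<^sub>R \<beta>3 \<in> C"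
    using assms(2-5) unfolding convex_hull_3 by blast
  then have comb: "a *\<^sub>R \<beta>1 + b *\<^sub>R \<beta>2 + c *\<^sub>R \<beta>3 \<in> half1_coefs \<union> half2_coefs"
    using C(1) by blast
  have C_coefs: "\<beta> \<in> half1_coefs \<union> half2_coefs" if "\<beta> \<in> C" for \<beta>
    using C(1) that by blast
  have "a *\<^sub>R y1 + b *\<^sub>R y2 + c *\<^sub>R y3 = qcomb (a *\<^sub>R \<beta>1 + b *\<^sub>R \<beta>2 + c *\<^sub>R \<beta>3) q"
    unfolding \<beta>(4-6) qcomb_add qcomb_scaleR ..
  then show ?thesis
    unfolding \<beta>(4-6) using Pmap_qcomb[OF comb] Pmap_qcomb[OF C_coefs] \<beta>(1-3)
    by (simp add: qcomb_add qcomb_scaleR)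
qed

text \<open>Under this condition P_q is affine on both triangles of W.\<close>

definition fits_halves :: "quad \<Rightarrow> bool" where
  "fits_halves W = (case W of (R1, R2, R3, R4) \<Rightarrow>
     ({R1, R2, R3} \<subseteq> T1 \<or> {R1, R2, R3} \<subseteq> T2) \<and> ({R1, R3, R4} \<subseteq> T1 \<or> {R1, R3, R4} \<subseteq> T2))"

lemma fits_halves_region:
  assumes "fits_halves W"
  shows "quad_region W \<subseteq> Qhull"
proof -
  obtain R1 R2 R3 R4 where W: "W = (R1, R2, R3, R4)" by (cases W rule: prod_cases4)
  have "{R1, R2, R3} \<subseteq> Qhull" "{R3, R4, R1} \<subseteq> Qhull"
    using assms unfolding fits_halves_def W Qhull_eq by auto
  then show ?thesis
    unfolding quad_region_def W by (simp add: hull_minimal)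
qed

lemma Pmap_map_quad:
  assumes "fits_halves W" "x \<in> Qhull"
  shows "Pmap q (map_quad (Pmap q V) W) x = Pmap q V (Pmap q W x)"
proof -
  obtain R1 R2 R3 R4 where W: "W = (R1, R2, R3, R4)" by (cases W rule: prod_cases4)
  obtain \<alpha> where \<alpha>: "\<alpha> \<in> half1_coefs \<union> half2_coefs" "x = qcomb \<alpha> q"
    using assms(2) unfolding Qhull_qcomb by blast
  have "Pmap q (map_quad (Pmap q V) W) x = qcomb \<alpha> (map_quad (Pmap q V) W)"
    using \<alpha> Pmap_qcomb by simp
  also have "\<dots> = Pmap q V (qcomb \<alpha> W)"
    using \<alpha>(1) assms(1)
    unfolding half1_coefs_def half2_coefs_def fits_halves_def W map_quad_def
    by (auto simp: Pmap_convex_comb)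
  also have "qcomb \<alpha> W = Pmap q W x"
    using \<alpha> Pmap_qcomb by simp
  finally show ?thesis .
qed

definition lab_map :: "quad set \<Rightarrow> pt set \<Rightarrow> pt set" where
  "lab_map W Y = (\<Union>V\<in>W. Pmap q V ` Y)"

lemma lab_map_mono: "Y \<subseteq> Z \<Longrightarrow> lab_map W Y \<subseteq> lab_map W Z"
  unfolding lab_map_def by blast

lemma lab_map_subset:
  assumes "\<forall>V\<in>W. fits_halves V" "Y \<subseteq> Qhull"
  shows "lab_map W Y \<subseteq> Qhull"
proof -
  have "Pmap q V ` Y \<subseteq> Qhull" if "V \<in> W" for V
  proof -
    have "Pmap q V ` Y \<subseteq> quad_region V"
      using image_mono[OF assms(2), of "Pmap q V"] unfolding Pmap_image .
    then show ?thesis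
      using fits_halves_region assms(1) that by blast
  qed
  then show ?thesis unfolding lab_map_def by blast
qed

lemma lab_map_power_subset:
  assumes "\<forall>V\<in>W. fits_halves V"
  shows "(lab_map W ^^ n) Qhull \<subseteq> Qhull"
proof (induction n)
  case (Suc n)
  then show ?case using lab_map_subset[OF assms] by simp
qed simp

lemma lab_map_power_decreasing:
  assumes "\<forall>V\<in>W. fits_halves V"
  shows "(lab_map W ^^ Suc n) Qhull \<subseteq> (lab_map W ^^ n) Qhull"
proof (induction n)
  case 0
  then show ?case using lab_map_subset[OF assms] by simp
next
  case (Suc n)
  then show ?case using lab_map_mono by simp
qed

lemma lab_level_image:
  assumes "\<forall>V\<in>W. fits_halves V" "Y \<subseteq> Qhull"
  shows "(\<Union>V\<in>lab_level q W n. Pmap q V ` Y) = (lab_map W ^^ Suc n) Y"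
  using assms(2)
proof (induction n arbitrary: Y)
  case 0
  then show ?case by (simp add: lab_map_def)
next
  case (Suc n)
  have "(\<Union>V\<in>lab_level q W (Suc n). Pmap q V ` Y) = (\<Union>U\<in>lab_level q W n. \<Union>V\<in>W. Pmap q (map_quad (Pmap q U) V) ` Y)"
    unfolding lab_level.simps by blast
  also have "\<dots> = (\<Union>U\<in>lab_level q W n. \<Union>V\<in>W. Pmap q U ` Pmap q V ` Y)"
  proof -
    have "Pmap q (map_quad (Pmap q U) V) ` Y = Pmap q U ` Pmap q V ` Y" if "V \<in> W" for U V
      unfolding image_image
    proof (rule image_cong[OF refl])
      fix x assume "x \<in> Y"
      then show "Pmap q (map_quad (Pmap q U) V) x = Pmap q U (Pmap q V x)"
        using Pmap_map_quad assms(1) that Suc.prems by blast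
    qed
    then show ?thesis by simp
  qed
  also have "\<dots> = (\<Union>U\<in>lab_level q W n. Pmap q U ` lab_map W Y)"
    unfolding lab_map_def image_UN ..
  also have "\<dots> = (lab_map W ^^ Suc (Suc n)) Y"
    using Suc.IH[OF lab_map_subset[OF assms(1) Suc.prems]] by (simp add: funpow_Suc_right del: funpow.simps)
  finally show ?case .
qed

lemma lab_level_region:
  "\<forall>V\<in>W. fits_halves V \<Longrightarrow> (\<Union>V\<in>lab_level q W n. quad_region V) = (lab_map W ^^ Suc n) Qhull"
  using lab_level_image[of W Qhull n] by (simp add: Pmap_image)

end

lemma finite_lab_level: "finite W \<Longrightarrow> finite (lab_level q W n)"
proof (induction n)
  case (Suc n)
  have "lab_level q W (Suc n) = (\<lambda>(U, V). map_quad (Pmap q U) V) ` (lab_level q W n \<times> W)"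
    unfolding lab_level.simps by force
  then show ?case using Suc by simp
qed simp

lemma closed_quad_region: "closed (quad_region V)"
  by (cases V rule: prod_cases4) (simp add: quad_region_def closed_Un compact_imp_closed compact_convex_hull)

section \<open>Cells\<close>

definition grid_coefs :: "nat \<Rightarrow> idx \<Rightarrow> coef" where
  "grid_coefs m r = (case r of (a, b, c, d) \<Rightarrow> (real a / real m, real b / real m, real c / real m, real d / real m))"

definition grid_index :: "nat \<Rightarrow> idx \<Rightarrow> bool" where
  "grid_index m r \<longleftrightarrow> (case r of (a, b, c, d) \<Rightarrow> a + b + c + d = m \<and> (b = 0 \<or> d = 0))"

lemma grid_coefs_half1: "0 < m \<Longrightarrow> a + b + c = m \<Longrightarrow> grid_coefs m (a, b, c, 0) \<in> half1_coefs"
  unfolding grid_coefs_def half1_coefs_def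
  by (simp add: add_divide_distrib[symmetric] flip: of_nat_add)

lemma grid_coefs_half2: "0 < m \<Longrightarrow> a + c + d = m \<Longrightarrow> grid_coefs m (a, 0, c, d) \<in> half2_coefs"
  unfolding grid_coefs_def half2_coefs_def
  by (simp add: add_divide_distrib[symmetric] flip: of_nat_add)

lemma grid_coefs_halves: "0 < m \<Longrightarrow> grid_index m r \<Longrightarrow> grid_coefs m r \<in> half1_coefs \<union> half2_coefs"
  by (cases r rule: prod_cases4) (auto simp: grid_index_def intro: grid_coefs_half1 grid_coefs_half2)

lemma grid_coefs_inj: "0 < m \<Longrightarrow> grid_coefs m r = grid_coefs m r' \<Longrightarrow> r = r'"
  by (cases r rule: prod_cases4; cases r' rule: prod_cases4) (simp add: grid_coefs_def divide_cancel_right)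

text \<open>The grid indices (with denominator m) of the vertices R1, R2, R3, R4 of the cell S_m(k).\<close>

definition cell_vertices :: "nat \<Rightarrow> idx \<Rightarrow> idx \<times> idx \<times> idx \<times> idx" where
  "cell_vertices m k = (case k of (k1, k2, k3, k4) \<Rightarrow>
     if k \<in> A1 m then ((k1+1, k2, k3, 0), (k1, k2+1, k3, 0), (k1, k2, k3+1, 0), (k1+1, k2-1, k3+1, 0))
     else if k \<in> A2 m then ((k1+1, 0, k3, k4), (k1+1, 0, k3+1, k4-1), (k1, 0, k3+1, k4), (k1, 0, k3, k4+1))
     else ((k1+1, 0, k3, 0), (k1, 1, k3, 0), (k1, 0, k3+1, 0), (k1, 0, k3, 1)))"

lemma cell_vertices_cases:
  assumes "k \<in> Aidx m"
  shows "(\<exists>k1 j k3. k = (k1, Suc j, k3, 0) \<and> k1 + Suc j + k3 = m - 1 \<and>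
     cell_vertices m k = ((k1+1, Suc j, k3, 0), (k1, Suc j+1, k3, 0), (k1, Suc j, k3+1, 0), (k1+1, j, k3+1, 0))) \<or>
   (\<exists>k1 j k3. k = (k1, 0, k3, Suc j) \<and> k1 + k3 + Suc j = m - 1 \<and>
     cell_vertices m k = ((k1+1, 0, k3, Suc j), (k1+1, 0, k3+1, j), (k1, 0, k3+1, Suc j), (k1, 0, k3, Suc j+1))) \<or>
   (\<exists>k1 k3. k = (k1, 0, k3, 0) \<and> k1 + k3 = m - 1 \<and>
     cell_vertices m k = ((k1+1, 0, k3, 0), (k1, 1, k3, 0), (k1, 0, k3+1, 0), (k1, 0, k3, 1)))"
proof -
  obtain k1 k2 k3 k4 where k: "k = (k1, k2, k3, k4)" by (cases k rule: prod_cases4)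
  consider "k \<in> A1 m" | "k \<notin> A1 m" "k \<in> A2 m" | "k \<notin> A1 m" "k \<notin> A2 m" "k \<in> A3 m"
    using assms unfolding Aidx_def by blast
  then show ?thesis
  proof cases
    case 1
    then have "k4 = 0" "k1 + k2 + k3 = m - 1" "k2 \<noteq> 0" unfolding k A1_def by auto
    moreover obtain j where "k2 = Suc j" using \<open>k2 \<noteq> 0\<close> not0_implies_Suc by blast
    ultimately show ?thesis using 1 unfolding cell_vertices_def k by simp
  next
    case 2
    then have "k2 = 0" "k1 + k3 + k4 = m - 1" "k4 \<noteq> 0" unfolding k A2_def by auto
    moreover obtain j where "k4 = Suc j" using \<open>k4 \<noteq> 0\<close> not0_implies_Suc by blast
    ultimately show ?thesis using 2 unfolding cell_vertices_def k by simp
  next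
    case 3
    then have "k2 = 0" "k4 = 0" "k1 + k3 = m - 1" unfolding k A3_def by auto
    then show ?thesis using 3 unfolding cell_vertices_def k by simp
  qed
qed

lemma cell_vertices_grid_index:
  assumes "k \<in> Aidx m" "0 < m" "cell_vertices m k = (r1, r2, r3, r4)"
  shows "grid_index m r1" "grid_index m r2" "grid_index m r3" "grid_index m r4"
  using cell_vertices_cases[OF assms(1)] assms(2,3) unfolding grid_index_def by auto

lemma Sm_cell_vertices:
  assumes "k \<in> Aidx m" "0 < m" "cell_vertices m k = (r1, r2, r3, r4)"
  shows "Sm q m k = (qcomb (grid_coefs m r1) q, qcomb (grid_coefs m r2) q,
    qcomb (grid_coefs m r3) q, qcomb (grid_coefs m r4) q)"
proof -
  obtain Q1 Q2 Q3 Q4 where q: "q = (Q1, Q2, Q3, Q4)" by (cases q rule: prod_cases4)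
  obtain k1 k2 k3 k4 where k: "k = (k1, k2, k3, k4)" by (cases k rule: prod_cases4)
  let ?g = "\<lambda>r. qcomb (grid_coefs m r) q"
  have "Sm q m k = (case cell_vertices m k of (r1, r2, r3, r4) \<Rightarrow> (?g r1, ?g r2, ?g r3, ?g r4))"
  proof -
    consider "k \<in> A1 m" | "k \<notin> A1 m" "k \<in> A2 m" | "k \<notin> A1 m" "k \<notin> A2 m" "k \<in> A3 m"
      using assms(1) unfolding Aidx_def by blast
    then show ?thesis
    proof cases
      case 1
      then have "1 \<le> k2" unfolding k A1_def by simp
      with 1 show ?thesis
        using assms(2) unfolding Sm_def cell_vertices_def grid_coefs_def q k Let_def
        by (simp add: prod_eq_iff of_nat_diff field_simps)
    next
      case 2
      then have "1 \<le> k4" unfolding k A2_def by simp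
      with 2 show ?thesis
        using assms(2) unfolding Sm_def cell_vertices_def grid_coefs_def q k Let_def
        by (simp add: prod_eq_iff of_nat_diff field_simps)
    next
      case 3
      then show ?thesis
        using assms(2) unfolding Sm_def cell_vertices_def grid_coefs_def q k Let_def
        by (simp add: prod_eq_iff field_simps)
    qed
  qed
  then show ?thesis using assms(3) by simp
qed

lemma cell_vertices_common_side:
  assumes "k \<in> Aidx m" "k' \<in> Aidx m" "k \<noteq> k'"
    "cell_vertices m k = (r1, r2, r3, r4)" "cell_vertices m k' = (p1, p2, p3, p4)"
  shows "({r1, r2} = {p1, p2} \<or> {r1, r2} = {p2, p3} \<or> {r1, r2} = {p3, p4} \<or> {r1, r2} = {p4, p1} \<or>
     {r2, r3} = {p1, p2} \<or> {r2, r3} = {p2, p3} \<or> {r2, r3} = {p3, p4} \<or> {r2, r3} = {p4, p1} \<or>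
     {r3, r4} = {p1, p2} \<or> {r3, r4} = {p2, p3} \<or> {r3, r4} = {p3, p4} \<or> {r3, r4} = {p4, p1} \<or>
     {r4, r1} = {p1, p2} \<or> {r4, r1} = {p2, p3} \<or> {r4, r1} = {p3, p4} \<or> {r4, r1} = {p4, p1}) \<longrightarrow>
    (r3 = p2 \<and> r4 = p1) \<or> (p3 = r2 \<and> p4 = r1) \<or> (r2 = p1 \<and> r3 = p4) \<or> (p2 = r1 \<and> p3 = r4)"
  using cell_vertices_cases[OF assms(1)] cell_vertices_cases[OF assms(2)] assms(3-5)
  by (elim disjE exE conjE) (simp_all add: doubleton_eq_iff)

lemma cell_vertices_bottom:
  "k1 + k2 = m - 1 \<Longrightarrow> \<exists>r3 r4. cell_vertices m (k1, k2, 0, 0) = ((k1+1, k2, 0, 0), (k1, k2+1, 0, 0), r3, r4)"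
  by (cases "k2 = 0") (simp_all add: cell_vertices_def A1_def A2_def)

lemma cell_vertices_top:
  "k1 + k2 = m - 1 \<Longrightarrow> \<exists>r1 r2. cell_vertices m (0, 0, k2, k1) = (r1, r2, (0, 0, k2+1, k1), (0, 0, k2, k1+1))"
  by (cases "k1 = 0") (simp_all add: cell_vertices_def A1_def A2_def)

lemma cell_vertices_left:
  "k1 + k4 = m - 1 \<Longrightarrow> \<exists>r2 r3. cell_vertices m (k1, 0, 0, k4) = ((k1+1, 0, 0, k4), r2, r3, (k1, 0, 0, k4+1))"
  by (cases "k4 = 0") (simp_all add: cell_vertices_def A1_def A2_def)

lemma cell_vertices_right:
  "k1 + k4 = m - 1 \<Longrightarrow> \<exists>r1 r4. cell_vertices m (0, k1, k4, 0) = (r1, (0, k1+1, k4, 0), (0, k1, k4+1, 0), r4)"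
  by (cases "k1 = 0") (simp_all add: cell_vertices_def A1_def A2_def)

lemma boundary_cells_Aidx:
  assumes "k1 + k2 = m - 1"
  shows "(k1, k2, 0, 0) \<in> Aidx m" "(0, 0, k2, k1) \<in> Aidx m" "(k1, 0, 0, k2) \<in> Aidx m" "(0, k1, k2, 0) \<in> Aidx m"
  using assms by (auto simp: Aidx_def A1_def A2_def A3_def)

lemma cell_vertices_coordinate_bounds:
  assumes "k \<in> Aidx m" "2 \<le> m" "cell_vertices m k = (r1, r2, r3, r4)"
  shows "k \<noteq> (m-1, 0, 0, 0) \<Longrightarrow> \<forall>r\<in>{r1, r2, r3, r4}. fst r \<le> m - 1"
    and "k \<noteq> (0, m-1, 0, 0) \<Longrightarrow> \<forall>r\<in>{r1, r2, r3, r4}. fst (snd r) \<le> m - 1"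
    and "k \<noteq> (0, 0, m-1, 0) \<Longrightarrow> \<forall>r\<in>{r1, r2, r3, r4}. fst (snd (snd r)) \<le> m - 1"
    and "k \<noteq> (0, 0, 0, m-1) \<Longrightarrow> \<forall>r\<in>{r1, r2, r3, r4}. snd (snd (snd r)) \<le> m - 1"
  using cell_vertices_cases[OF assms(1)] assms(2,3) by auto

lemma corner_bound:
  assumes "0 < m" "a \<le> m - 1" "0 < K" "0 \<le> x"
  shows "(real a * K - x) / real m \<le> (real m - 1) / real m * K"
proof -
  have "real a \<le> real m - 1" using assms(1,2) by linarith
  then have "real a * K \<le> (real m - 1) * K"
    using assms(3) by (simp add: mult_right_mono)
  then have "real a * K - x \<le> (real m - 1) * K"
    using assms(4) by linarith
  then show ?thesis
    using assms(1) by (simp add: divide_right_mono)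
qed

lemma corner_bound_less: "0 < m \<Longrightarrow> 0 < K \<Longrightarrow> (real m - 1) / real m * K < K"
  by (simp add: field_simps)

context convex_quad
begin

lemma grid_point_inj:
  assumes "0 < m" "grid_index m r" "grid_index m r'" "qcomb (grid_coefs m r) q = qcomb (grid_coefs m r') q"
  shows "r = r'"
  using inj_onD[OF qcomb_inj_on assms(4)] grid_coefs_halves[OF assms(1)] assms(2,3) grid_coefs_inj[OF assms(1)]
  by blast

lemma grid_point_T1: "0 < m \<Longrightarrow> a + b + c = m \<Longrightarrow> qcomb (grid_coefs m (a, b, c, 0)) q \<in> T1"
  unfolding T1_eq by (blast intro: grid_coefs_half1)

lemma grid_point_T2: "0 < m \<Longrightarrow> a + c + d = m \<Longrightarrow> qcomb (grid_coefs m (a, 0, c, d)) q \<in> T2"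
  unfolding T2_eq by (blast intro: grid_coefs_half2)

lemma cell_fits_halves:
  assumes "k \<in> Aidx m" "0 < m"
  shows "fits_halves (Sm q m k)"
proof -
  obtain r1 r2 r3 r4 where r: "cell_vertices m k = (r1, r2, r3, r4)"
    by (cases "cell_vertices m k" rule: prod_cases4)
  show ?thesis
    using cell_vertices_cases[OF assms(1)] assms(2) r
    unfolding Sm_cell_vertices[OF assms r] fits_halves_def
    by (auto simp: grid_point_T1 grid_point_T2)
qed

lemma grid_segment_eq:
  assumes "0 < m" "grid_index m a" "grid_index m b" "grid_index m c" "grid_index m d"
    "closed_segment (qcomb (grid_coefs m a) q) (qcomb (grid_coefs m b) q)
      = closed_segment (qcomb (grid_coefs m c) q) (qcomb (grid_coefs m d) q)"
  shows "{a, b} = {c, d}"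
proof -
  have "{qcomb (grid_coefs m a) q, qcomb (grid_coefs m b) q} = {qcomb (grid_coefs m c) q, qcomb (grid_coefs m d) q}"
    using assms(6) by simp
  then show ?thesis
    using grid_point_inj[OF assms(1)] assms(2-5) unfolding doubleton_eq_iff by blast
qed

lemma cells_common_side:
  assumes "k \<in> Aidx m" "k' \<in> Aidx m" "0 < m" "quad_adj (Sm q m k) (Sm q m k')"
    "Sm q m k = (R1, R2, R3, R4)" "Sm q m k' = (R1', R2', R3', R4')"
  shows "(R3 = R2' \<and> R4 = R1') \<or> (R3' = R2 \<and> R4' = R1) \<or> (R2 = R1' \<and> R3 = R4') \<or> (R2' = R1 \<and> R3' = R4)"
proof -
  obtain r1 r2 r3 r4 where r: "cell_vertices m k = (r1, r2, r3, r4)"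
    by (cases "cell_vertices m k" rule: prod_cases4)
  obtain p1 p2 p3 p4 where p: "cell_vertices m k' = (p1, p2, p3, p4)"
    by (cases "cell_vertices m k'" rule: prod_cases4)
  let ?g = "\<lambda>r. qcomb (grid_coefs m r) q"
  have R: "R1 = ?g r1" "R2 = ?g r2" "R3 = ?g r3" "R4 = ?g r4"
    and R': "R1' = ?g p1" "R2' = ?g p2" "R3' = ?g p3" "R4' = ?g p4"
    using Sm_cell_vertices[OF assms(1,3) r] Sm_cell_vertices[OF assms(2,3) p] assms(5,6) by simp_all
  have grid: "\<forall>r\<in>{r1, r2, r3, r4, p1, p2, p3, p4}. grid_index m r"
    using cell_vertices_grid_index[OF assms(1,3) r] cell_vertices_grid_index[OF assms(2,3) p] by blast
  obtain S where S: "S \<in> quad_sides (Sm q m k)" "S \<in> quad_sides (Sm q m k')" and "k \<noteq> k'"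
    using assms(4) unfolding quad_adj_def by blast
  have "\<exists>P \<in> {(r1, r2), (r2, r3), (r3, r4), (r4, r1)}. S = closed_segment (?g (fst P)) (?g (snd P))"
    using S(1) unfolding assms(5) R quad_sides_def by auto
  then obtain P where P: "P \<in> {(r1, r2), (r2, r3), (r3, r4), (r4, r1)}"
    "S = closed_segment (?g (fst P)) (?g (snd P))" by blast
  have "\<exists>P' \<in> {(p1, p2), (p2, p3), (p3, p4), (p4, p1)}. S = closed_segment (?g (fst P')) (?g (snd P'))"
    using S(2) unfolding assms(6) R' quad_sides_def by auto
  then obtain P' where P': "P' \<in> {(p1, p2), (p2, p3), (p3, p4), (p4, p1)}"
    "S = closed_segment (?g (fst P')) (?g (snd P'))" by blast
  have "{fst P, snd P} = {fst P', snd P'}"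
    using grid_segment_eq[OF assms(3) _ _ _ _ P(2)[symmetric, unfolded P'(2)]] grid P(1) P'(1) by auto
  then have "{r1, r2} = {p1, p2} \<or> {r1, r2} = {p2, p3} \<or> {r1, r2} = {p3, p4} \<or> {r1, r2} = {p4, p1} \<or>
     {r2, r3} = {p1, p2} \<or> {r2, r3} = {p2, p3} \<or> {r2, r3} = {p3, p4} \<or> {r2, r3} = {p4, p1} \<or>
     {r3, r4} = {p1, p2} \<or> {r3, r4} = {p2, p3} \<or> {r3, r4} = {p3, p4} \<or> {r3, r4} = {p4, p1} \<or>
     {r4, r1} = {p1, p2} \<or> {r4, r1} = {p2, p3} \<or> {r4, r1} = {p3, p4} \<or> {r4, r1} = {p4, p1}"
    using P(1) P'(1) by (elim insertE emptyE; simp)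
  then have "(r3 = p2 \<and> r4 = p1) \<or> (p3 = r2 \<and> p4 = r1) \<or> (r2 = p1 \<and> r3 = p4) \<or> (p2 = r1 \<and> p3 = r4)"
    by (rule mp[OF cell_vertices_common_side[OF assms(1,2) \<open>k \<noteq> k'\<close> r p]])
  then show ?thesis
    unfolding R R' by (elim disjE) simp_all
qed

text \<open>Points on the sides Q1Q2, Q4Q3, Q1Q4 and Q2Q3; in the chart below they become the
  points (s, 0), (s, 1), (0, 1 - t) and (1, 1 - t) of the unit square.\<close>

definition bottom_pt :: "real \<Rightarrow> pt" where "bottom_pt s = qcomb (1 - s, s, 0, 0) q"
definition top_pt :: "real \<Rightarrow> pt" where "top_pt s = qcomb (0, 0, s, 1 - s) q"
definition left_pt :: "real \<Rightarrow> pt" where "left_pt t = qcomb (t, 0, 0, 1 - t) q"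
definition right_pt :: "real \<Rightarrow> pt" where "right_pt t = qcomb (0, t, 1 - t, 0) q"

lemma side_pt_coefs:
  assumes "0 \<le> s" "s \<le> 1"
  shows "(1 - s, s, 0, 0) \<in> half1_coefs \<union> half2_coefs" "(0, 0, s, 1 - s) \<in> half1_coefs \<union> half2_coefs"
    "(s, 0, 0, 1 - s) \<in> half1_coefs \<union> half2_coefs" "(0, s, 1 - s, 0) \<in> half1_coefs \<union> half2_coefs"
  using assms unfolding half1_coefs_def half2_coefs_def by auto

lemma side_pts_Qhull:
  assumes "0 \<le> s" "s \<le> 1"
  shows "bottom_pt s \<in> Qhull" "top_pt s \<in> Qhull" "left_pt s \<in> Qhull" "right_pt s \<in> Qhull"
  unfolding bottom_pt_def top_pt_def left_pt_def right_pt_def Qhull_qcomb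
  using side_pt_coefs[OF assms] by blast+

lemma Pmap_side_pts:
  assumes "0 \<le> s" "s \<le> 1"
  shows "Pmap q V (bottom_pt s) = qcomb (1 - s, s, 0, 0) V" "Pmap q V (top_pt s) = qcomb (0, 0, s, 1 - s) V"
    "Pmap q V (left_pt s) = qcomb (s, 0, 0, 1 - s) V" "Pmap q V (right_pt s) = qcomb (0, s, 1 - s, 0) V"
  unfolding bottom_pt_def top_pt_def left_pt_def right_pt_def
  using Pmap_qcomb side_pt_coefs[OF assms] by blast+

lemma Pmap_glue:
  assumes "(R3 = R2' \<and> R4 = R1') \<or> (R3' = R2 \<and> R4' = R1) \<or> (R2 = R1' \<and> R3 = R4') \<or> (R2' = R1 \<and> R3' = R4)"
    "0 \<le> s" "s \<le> 1" "0 \<le> t" "t \<le> 1"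
    "bottom_pt s \<in> S" "top_pt s \<in> S" "left_pt t \<in> S" "right_pt t \<in> S"
  shows "Pmap q (R1, R2, R3, R4) ` S \<inter> Pmap q (R1', R2', R3', R4') ` S \<noteq> {}"
  using assms(1)
proof (elim disjE conjE)
  assume "R3 = R2'" "R4 = R1'"
  then have "Pmap q (R1, R2, R3, R4) (top_pt s) = Pmap q (R1', R2', R3', R4') (bottom_pt s)"
    using Pmap_side_pts[OF assms(2,3)] by (simp add: add.commute)
  then show ?thesis using assms(6,7) by blast
next
  assume "R3' = R2" "R4' = R1"
  then have "Pmap q (R1', R2', R3', R4') (top_pt s) = Pmap q (R1, R2, R3, R4) (bottom_pt s)"
    using Pmap_side_pts[OF assms(2,3)] by (simp add: add.commute)
  then show ?thesis using assms(6,7) by blast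
next
  assume "R2 = R1'" "R3 = R4'"
  then have "Pmap q (R1, R2, R3, R4) (right_pt t) = Pmap q (R1', R2', R3', R4') (left_pt t)"
    using Pmap_side_pts[OF assms(4,5)] by simp
  then show ?thesis using assms(8,9) by blast
next
  assume "R2' = R1" "R3' = R4"
  then have "Pmap q (R1', R2', R3', R4') (right_pt t) = Pmap q (R1, R2, R3, R4) (left_pt t)"
    using Pmap_side_pts[OF assms(4,5)] by simp
  then show ?thesis using assms(8,9) by blast
qed

lemma qcomb_convex2: "(1 - s) *\<^sub>R qcomb \<alpha> V + s *\<^sub>R qcomb \<beta> V = qcomb ((1 - s) *\<^sub>R \<alpha> + s *\<^sub>R \<beta>) V"
  by (simp add: qcomb_add qcomb_scaleR)

lemma Pmap_bottom_cell:
  assumes "k1 + k2 = m - 1" "0 < m" "0 \<le> s" "s \<le> 1"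
  shows "Pmap q (Sm q m (k1, k2, 0, 0)) (bottom_pt s) = bottom_pt ((real k2 + s) / real m)"
proof -
  obtain r3 r4 where r: "cell_vertices m (k1, k2, 0, 0) = ((k1+1, k2, 0, 0), (k1, k2+1, 0, 0), r3, r4)"
    using cell_vertices_bottom[OF assms(1)] by blast
  have "real k1 = real m - real k2 - 1" using assms(1,2) by linarith
  then have coefs: "(1 - s) *\<^sub>R grid_coefs m (k1+1, k2, 0, 0) + s *\<^sub>R grid_coefs m (k1, k2+1, 0, 0)
      = (1 - (real k2 + s) / real m, (real k2 + s) / real m, 0, 0)"
    using assms(2) by (simp add: grid_coefs_def field_simps)
  have "Pmap q (Sm q m (k1, k2, 0, 0)) (bottom_pt s)
      = (1 - s) *\<^sub>R qcomb (grid_coefs m (k1+1, k2, 0, 0)) q + s *\<^sub>R qcomb (grid_coefs m (k1, k2+1, 0, 0)) q"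
    unfolding Sm_cell_vertices[OF boundary_cells_Aidx(1)[OF assms(1)] assms(2) r] Pmap_side_pts[OF assms(3,4)]
    by simp
  also have "\<dots> = bottom_pt ((real k2 + s) / real m)"
    unfolding qcomb_convex2 coefs bottom_pt_def ..
  finally show ?thesis .
qed

lemma Pmap_top_cell:
  assumes "k1 + k2 = m - 1" "0 < m" "0 \<le> s" "s \<le> 1"
  shows "Pmap q (Sm q m (0, 0, k2, k1)) (top_pt s) = top_pt ((real k2 + s) / real m)"
proof -
  obtain r1 r2 where r: "cell_vertices m (0, 0, k2, k1) = (r1, r2, (0, 0, k2+1, k1), (0, 0, k2, k1+1))"
    using cell_vertices_top[OF assms(1)] by blast
  have "real k1 = real m - real k2 - 1" using assms(1,2) by linarith
  then have coefs: "(1 - s) *\<^sub>R grid_coefs m (0, 0, k2, k1+1) + s *\<^sub>R grid_coefs m (0, 0, k2+1, k1)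
      = (0, 0, (real k2 + s) / real m, 1 - (real k2 + s) / real m)"
    using assms(2) by (simp add: grid_coefs_def field_simps)
  have "Pmap q (Sm q m (0, 0, k2, k1)) (top_pt s)
      = (1 - s) *\<^sub>R qcomb (grid_coefs m (0, 0, k2, k1+1)) q + s *\<^sub>R qcomb (grid_coefs m (0, 0, k2+1, k1)) q"
    unfolding Sm_cell_vertices[OF boundary_cells_Aidx(2)[OF assms(1)] assms(2) r] Pmap_side_pts[OF assms(3,4)]
    by (simp add: add.commute)
  also have "\<dots> = top_pt ((real k2 + s) / real m)"
    unfolding qcomb_convex2 coefs top_pt_def ..
  finally show ?thesis .
qed

lemma Pmap_left_cell:
  assumes "k1 + k4 = m - 1" "0 < m" "0 \<le> t" "t \<le> 1"
  shows "Pmap q (Sm q m (k1, 0, 0, k4)) (left_pt t) = left_pt ((real k1 + t) / real m)"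
proof -
  obtain r2 r3 where r: "cell_vertices m (k1, 0, 0, k4) = ((k1+1, 0, 0, k4), r2, r3, (k1, 0, 0, k4+1))"
    using cell_vertices_left[OF assms(1)] by blast
  have "real k4 = real m - real k1 - 1" using assms(1,2) by linarith
  then have coefs: "(1 - t) *\<^sub>R grid_coefs m (k1, 0, 0, k4+1) + t *\<^sub>R grid_coefs m (k1+1, 0, 0, k4)
      = ((real k1 + t) / real m, 0, 0, 1 - (real k1 + t) / real m)"
    using assms(2) by (simp add: grid_coefs_def field_simps)
  have "Pmap q (Sm q m (k1, 0, 0, k4)) (left_pt t)
      = (1 - t) *\<^sub>R qcomb (grid_coefs m (k1, 0, 0, k4+1)) q + t *\<^sub>R qcomb (grid_coefs m (k1+1, 0, 0, k4)) q"
    unfolding Sm_cell_vertices[OF boundary_cells_Aidx(3)[OF assms(1)] assms(2) r] Pmap_side_pts[OF assms(3,4)]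
    by (simp add: add.commute)
  also have "\<dots> = left_pt ((real k1 + t) / real m)"
    unfolding qcomb_convex2 coefs left_pt_def ..
  finally show ?thesis .
qed

lemma Pmap_right_cell:
  assumes "k1 + k4 = m - 1" "0 < m" "0 \<le> t" "t \<le> 1"
  shows "Pmap q (Sm q m (0, k1, k4, 0)) (right_pt t) = right_pt ((real k1 + t) / real m)"
proof -
  obtain r1 r4 where r: "cell_vertices m (0, k1, k4, 0) = (r1, (0, k1+1, k4, 0), (0, k1, k4+1, 0), r4)"
    using cell_vertices_right[OF assms(1)] by blast
  have "real k4 = real m - real k1 - 1" using assms(1,2) by linarith
  then have coefs: "(1 - t) *\<^sub>R grid_coefs m (0, k1, k4+1, 0) + t *\<^sub>R grid_coefs m (0, k1+1, k4, 0)
      = (0, (real k1 + t) / real m, 1 - (real k1 + t) / real m, 0)"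
    using assms(2) by (simp add: grid_coefs_def field_simps)
  have "Pmap q (Sm q m (0, k1, k4, 0)) (right_pt t)
      = (1 - t) *\<^sub>R qcomb (grid_coefs m (0, k1, k4+1, 0)) q + t *\<^sub>R qcomb (grid_coefs m (0, k1+1, k4, 0)) q"
    unfolding Sm_cell_vertices[OF boundary_cells_Aidx(4)[OF assms(1)] assms(2) r] Pmap_side_pts[OF assms(3,4)]
    by (simp add: add.commute)
  also have "\<dots> = right_pt ((real k1 + t) / real m)"
    unfolding qcomb_convex2 coefs right_pt_def ..
  finally show ?thesis .
qed

lemma orient_grid_point:
  assumes "0 < m" "grid_index m (a, b, c, d)"
  shows "orient P R (qcomb (grid_coefs m (a, b, c, d)) q)
    = (real a * orient P R Q1 + real b * orient P R Q2 + real c * orient P R Q3 + real d * orient P R Q4) / real m"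
proof -
  have "real a / real m + real b / real m + real c / real m + real d / real m = 1"
    using assms unfolding grid_index_def by (simp add: add_divide_distrib[symmetric] flip: of_nat_add)
  then have "orient P R (qcomb (grid_coefs m (a, b, c, d)) q) = real a / real m * orient P R Q1
      + real b / real m * orient P R Q2 + real c / real m * orient P R Q3 + real d / real m * orient P R Q4"
    unfolding grid_coefs_def prod.case by (rule orient_qcomb)
  then show ?thesis by (simp add: add_divide_distrib)
qed

text \<open>A vertex of Q is separated from every cell other than the corner cell at it by a line
  parallel to the diagonal that avoids the vertex.\<close>

lemma corner_notin_cell:
  assumes "k \<in> Aidx m" "0 < m" "cell_vertices m k = (r1, r2, r3, r4)"
    "\<forall>r\<in>{r1, r2, r3, r4}. orient P R (qcomb (grid_coefs m r) q) \<le> M" "M < orient P R z"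
  shows "z \<notin> quad_region (Sm q m k)"
proof -
  have "quad_region (Sm q m k) \<subseteq> {y. orient P R y \<le> M}"
    unfolding Sm_cell_vertices[OF assms(1-3)] using assms(4) by (intro quad_region_orient_le) simp
  then show ?thesis using assms(5) by auto
qed

lemma corners_notin_cells:
  assumes "k \<in> Aidx m" "2 \<le> m"
  shows "k \<noteq> (m-1, 0, 0, 0) \<Longrightarrow> Q1 \<notin> quad_region (Sm q m k)"
    and "k \<noteq> (0, m-1, 0, 0) \<Longrightarrow> Q2 \<notin> quad_region (Sm q m k)"
    and "k \<noteq> (0, 0, m-1, 0) \<Longrightarrow> Q3 \<notin> quad_region (Sm q m k)"
    and "k \<noteq> (0, 0, 0, m-1) \<Longrightarrow> Q4 \<notin> quad_region (Sm q m k)"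
proof -
  have m: "0 < m" using assms(2) by simp
  obtain r1 r2 r3 r4 where r: "cell_vertices m k = (r1, r2, r3, r4)"
    by (cases "cell_vertices m k" rule: prod_cases4)
  have grid: "\<forall>r\<in>{r1, r2, r3, r4}. grid_index m r"
    using cell_vertices_grid_index[OF assms(1) m r] by simp
  note bounds = cell_vertices_coordinate_bounds[OF assms r]
  note notin = corner_notin_cell[OF assms(1) m r]
  have nonneg: "0 \<le> real x * orient Q1 Q2 Q3" "0 \<le> real x * orient Q1 Q3 Q4"
    "0 \<le> real x * orient Q1 Q2 Q4" "0 \<le> real x * orient Q2 Q3 Q4" for x
    using orient_pos by simp_all
  show "Q1 \<notin> quad_region (Sm q m k)" if "k \<noteq> (m-1, 0, 0, 0)"
  proof (rule notin)
    show "\<forall>r\<in>{r1, r2, r3, r4}. orient Q2 Q4 (qcomb (grid_coefs m r) q) \<le> (real m - 1) / real m * orient Q1 Q2 Q4"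
      using grid bounds(1)[OF that] corner_bound[OF m _ orient_pos(3) nonneg(4)]
      by (force simp: orient_grid_point[OF m] orient_normalise)
    show "(real m - 1) / real m * orient Q1 Q2 Q4 < orient Q2 Q4 Q1"
      using corner_bound_less[OF m orient_pos(3)] by (simp add: orient_normalise)
  qed
  show "Q2 \<notin> quad_region (Sm q m k)" if "k \<noteq> (0, m-1, 0, 0)"
  proof (rule notin)
    show "\<forall>r\<in>{r1, r2, r3, r4}. orient Q3 Q1 (qcomb (grid_coefs m r) q) \<le> (real m - 1) / real m * orient Q1 Q2 Q3"
      using grid bounds(2)[OF that] corner_bound[OF m _ orient_pos(1) nonneg(2)]
      by (force simp: orient_grid_point[OF m] orient_normalise)
    show "(real m - 1) / real m * orient Q1 Q2 Q3 < orient Q3 Q1 Q2"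
      using corner_bound_less[OF m orient_pos(1)] by (simp add: orient_normalise)
  qed
  show "Q3 \<notin> quad_region (Sm q m k)" if "k \<noteq> (0, 0, m-1, 0)"
  proof (rule notin)
    show "\<forall>r\<in>{r1, r2, r3, r4}. orient Q4 Q2 (qcomb (grid_coefs m r) q) \<le> (real m - 1) / real m * orient Q2 Q3 Q4"
      using grid bounds(3)[OF that] corner_bound[OF m _ orient_pos(4) nonneg(3)]
      by (force simp: orient_grid_point[OF m] orient_normalise)
    show "(real m - 1) / real m * orient Q2 Q3 Q4 < orient Q4 Q2 Q3"
      using corner_bound_less[OF m orient_pos(4)] by (simp add: orient_normalise)
  qed
  show "Q4 \<notin> quad_region (Sm q m k)" if "k \<noteq> (0, 0, 0, m-1)"
  proof (rule notin)
    show "\<forall>r\<in>{r1, r2, r3, r4}. orient Q1 Q3 (qcomb (grid_coefs m r) q) \<le> (real m - 1) / real m * orient Q1 Q3 Q4"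
      using grid bounds(4)[OF that] corner_bound[OF m _ orient_pos(2) nonneg(1)]
      by (force simp: orient_grid_point[OF m] orient_normalise)
    show "(real m - 1) / real m * orient Q1 Q3 Q4 < orient Q1 Q3 Q4"
      using corner_bound_less[OF m orient_pos(2)] by simp
  qed
qed

end

section \<open>Crossing paths\<close>

definition unit_square :: quad where
  "unit_square = ((0, 0), (1, 0), (1, 1), (0, 1))"

lemma convex_quad_unit_square: "convex_quad (0, 0) (1, 0) (1, 1) (0, 1)"
  by unfold_locales (simp add: convex_quad_acw_def left_turn_def cross2_def)

context convex_quad
begin

text \<open>P_q for the unit square is a piecewise affine homeomorphism of Q onto the unit
  square, in which the Fashoda meet theorem applies.\<close>

abbreviation "chart \<equiv> Pmap q unit_square"

lemma chart_qcomb: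
  "(a, b, c, d) \<in> half1_coefs \<union> half2_coefs \<Longrightarrow> chart (qcomb (a, b, c, d) q) = (b + c, c + d)"
  using Pmap_qcomb[of "(a, b, c, d)" unit_square] by (simp add: unit_square_def)

lemma chart_inj_on: "inj_on chart Qhull"
proof (rule inj_onI)
  fix x y assume "x \<in> Qhull" "y \<in> Qhull" and eq: "chart x = chart y"
  then obtain \<alpha> \<beta> where \<alpha>: "\<alpha> \<in> half1_coefs \<union> half2_coefs" "x = qcomb \<alpha> q"
    and \<beta>: "\<beta> \<in> half1_coefs \<union> half2_coefs" "y = qcomb \<beta> q"
    unfolding Qhull_qcomb by blast
  have "qcomb \<alpha> unit_square = qcomb \<beta> unit_square"
    using eq Pmap_qcomb \<alpha> \<beta> by simp
  then have "\<alpha> = \<beta>"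
    using inj_onD[OF convex_quad.qcomb_inj_on[OF convex_quad_unit_square]] \<alpha>(1) \<beta>(1)
    unfolding unit_square_def by blast
  then show "x = y" using \<alpha> \<beta> by simp
qed

lemma chart_unit_box:
  assumes "x \<in> Qhull"
  shows "0 \<le> fst (chart x) \<and> fst (chart x) \<le> 1 \<and> 0 \<le> snd (chart x) \<and> snd (chart x) \<le> 1"
proof -
  obtain \<alpha> where "\<alpha> \<in> half1_coefs \<union> half2_coefs" "x = qcomb \<alpha> q"
    using assms unfolding Qhull_qcomb by blast
  moreover obtain a b c d where "\<alpha> = (a, b, c, d)"
    by (cases \<alpha> rule: prod_cases4)
  ultimately have "(a, b, c, d) \<in> half1_coefs \<union> half2_coefs" "x = qcomb (a, b, c, d) q"
    by simp_all
  moreover from this(1) have "0 \<le> b + c \<and> b + c \<le> 1 \<and> 0 \<le> c + d \<and> c + d \<le> 1"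
    unfolding half1_coefs_def half2_coefs_def by auto
  ultimately show ?thesis
    using chart_qcomb by (simp del: qcomb_simp)
qed

lemma chart_corners: "chart Q1 = (0, 0)" "chart Q2 = (1, 0)" "chart Q3 = (1, 1)" "chart Q4 = (0, 1)"
  using chart_qcomb[of 1 0 0 0] chart_qcomb[of 0 1 0 0] chart_qcomb[of 0 0 1 0] chart_qcomb[of 0 0 0 1]
  by (simp_all add: half1_coefs_def half2_coefs_def)

lemma chart_side_pts:
  assumes "0 \<le> s" "s \<le> 1"
  shows "chart (bottom_pt s) = (s, 0)" "chart (top_pt s) = (s, 1)"
    "chart (left_pt s) = (0, 1 - s)" "chart (right_pt s) = (1, 1 - s)"
  using chart_qcomb[OF side_pt_coefs(1)[OF assms]] chart_qcomb[OF side_pt_coefs(2)[OF assms]]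
    chart_qcomb[OF side_pt_coefs(3)[OF assms]] chart_qcomb[OF side_pt_coefs(4)[OF assms]]
  by (simp_all add: bottom_pt_def top_pt_def left_pt_def right_pt_def)

lemma paths_cross:
  assumes "path f" "path g" "path_image f \<subseteq> Qhull" "path_image g \<subseteq> Qhull"
    "snd (chart (pathstart f)) = 0" "snd (chart (pathfinish f)) = 1"
    "fst (chart (pathstart g)) = 0" "fst (chart (pathfinish g)) = 1"
  shows "path_image f \<inter> path_image g \<noteq> {}"
proof -
  define h :: "pt \<Rightarrow> real^2" where "h x = (\<chi> i. if i = 1 then fst (chart x) else snd (chart x))" for x
  have h_nth: "h x $ 1 = fst (chart x)" "h x $ 2 = snd (chart x)" for x
    by (simp_all add: h_def)
  have "continuous_on Qhull (\<lambda>x. if i = 1 then fst (chart x) else snd (chart x))" for i :: 2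
    by (cases "i = 1") (simp_all add: continuous_on_fst continuous_on_snd continuous_on_Pmap)
  then have "continuous_on Qhull h"
    unfolding h_def by (rule continuous_on_vec_lambda)
  then have paths: "path (h \<circ> f)" "path (h \<circ> g)"
    using assms(1-4) by (auto intro: path_continuous_image continuous_on_subset)
  have "h x \<in> cbox 0 1" if "x \<in> Qhull" for x
    using chart_unit_box[OF that] unfolding mem_box_cart forall_2 h_nth by simp
  then have box: "path_image (h \<circ> f) \<subseteq> cbox 0 1" "path_image (h \<circ> g) \<subseteq> cbox 0 1"
    using assms(3,4) unfolding path_image_compose by blast+
  obtain z where "z \<in> path_image (h \<circ> g)" "z \<in> path_image (h \<circ> f)"
    by (rule fashoda[OF paths(2,1) box(2,1)])
      (use assms(5-8) in \<open>simp_all add: pathstart_compose pathfinish_compose h_nth\<close>)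
  then obtain u v where u: "u \<in> path_image g" "v \<in> path_image f" "h u = h v"
    unfolding path_image_compose by auto
  then have "chart u = chart v"
    using h_nth by (metis prod_eq_iff)
  then have "u = v"
    using inj_onD[OF chart_inj_on] u(1,2) assms(3,4) by blast
  then show ?thesis using u(1,2) by blast
qed

definition spans :: "pt set \<Rightarrow> bool" where
  "spans S \<longleftrightarrow> path_connected S \<and> (\<exists>s\<in>{0..1}. bottom_pt s \<in> S \<and> top_pt s \<in> S) \<and>
     (\<exists>t\<in>{0..1}. left_pt t \<in> S \<and> right_pt t \<in> S)"

lemma spans_Qhull: "spans Qhull"
  unfolding spans_def using side_pts_Qhull[of 0] by (auto intro: convex_imp_path_connected)

lemma spans_meets_corner_path:
  assumes "spans S" "S \<subseteq> Qhull" "path \<gamma>" "path_image \<gamma> \<subseteq> Qhull"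
    "pathstart \<gamma> \<in> {Q1, Q3}" "pathfinish \<gamma> \<in> {Q2, Q4}"
  shows "path_image \<gamma> \<inter> S \<noteq> {}"
proof -
  obtain s t where st: "0 \<le> s" "s \<le> 1" "0 \<le> t" "t \<le> 1" "bottom_pt s \<in> S" "top_pt s \<in> S"
    "left_pt t \<in> S" "right_pt t \<in> S"
    using assms(1) unfolding spans_def by auto
  obtain f where f: "path f" "path_image f \<subseteq> S" "pathstart f = bottom_pt s" "pathfinish f = top_pt s"
    using assms(1) st unfolding spans_def path_connected_def by blast
  obtain g where g: "path g" "path_image g \<subseteq> S" "pathstart g = left_pt t" "pathfinish g = right_pt t"
    using assms(1) st unfolding spans_def path_connected_def by blast
  have fg: "path_image f \<subseteq> Qhull" "path_image g \<subseteq> Qhull" using f(2) g(2) assms(2) by auto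
  have \<gamma>': "path (reversepath \<gamma>)" "path_image (reversepath \<gamma>) \<subseteq> Qhull"
    using assms(3,4) by (simp_all add: path_image_reversepath)
  note chart_f = chart_side_pts(1,2)[OF st(1,2)] and chart_g = chart_side_pts(3,4)[OF st(3,4)]
  consider "pathstart \<gamma> = Q1" "pathfinish \<gamma> = Q2" | "pathstart \<gamma> = Q1" "pathfinish \<gamma> = Q4"
    | "pathstart \<gamma> = Q3" "pathfinish \<gamma> = Q2" | "pathstart \<gamma> = Q3" "pathfinish \<gamma> = Q4"
    using assms(5,6) by blast
  then show ?thesis
  proof cases
    case 1
    then have "path_image f \<inter> path_image \<gamma> \<noteq> {}"
      using paths_cross[OF f(1) assms(3) fg(1) assms(4)] f(3,4) chart_f chart_corners by simp
    then show ?thesis using f(2) by blast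
  next
    case 2
    then have "path_image \<gamma> \<inter> path_image g \<noteq> {}"
      using paths_cross[OF assms(3) g(1) assms(4) fg(2)] g(3,4) chart_g chart_corners by simp
    then show ?thesis using g(2) by blast
  next
    case 3
    then have "path_image (reversepath \<gamma>) \<inter> path_image g \<noteq> {}"
      using paths_cross[OF \<gamma>'(1) g(1) \<gamma>'(2) fg(2)] g(3,4) chart_g chart_corners by simp
    then show ?thesis using g(2) by (auto simp: path_image_reversepath)
  next
    case 4
    then have "path_image f \<inter> path_image (reversepath \<gamma>) \<noteq> {}"
      using paths_cross[OF f(1) \<gamma>'(1) fg(1) \<gamma>'(2)] f(3,4) chart_f chart_corners by simp
    then show ?thesis using f(2) by (auto simp: path_image_reversepath)
  qed
qed

end

section \<open>The labyrinth fractal\<close>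

lemma path_connected_UN_graph:
  assumes "graph_connected W E" "\<And>V. V \<in> W \<Longrightarrow> path_connected (F V)"
    "\<And>V V'. V \<in> W \<Longrightarrow> V' \<in> W \<Longrightarrow> E V V' \<Longrightarrow> F V \<inter> F V' \<noteq> {}"
  shows "path_connected (\<Union>V\<in>W. F V)"
  unfolding path_connected_component
proof (intro ballI)
  let ?U = "\<Union>V\<in>W. F V"
  have F_sub: "F V \<subseteq> ?U" if "V \<in> W" for V
    using that by blast
  fix x y assume "x \<in> ?U" "y \<in> ?U"
  then obtain V V' where V: "V \<in> W" "x \<in> F V" and V': "V' \<in> W" "y \<in> F V'" by blast
  have "(\<lambda>a b. a \<in> W \<and> b \<in> W \<and> E a b)\<^sup>*\<^sup>* V V'"
    using assms(1) V(1) V'(1) unfolding graph_connected_def by blast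
  then have "\<forall>y\<in>F V'. path_component ?U x y"
  proof (induction rule: rtranclp_induct)
    case base
    show ?case
      using assms(2)[OF V(1)] V(2) path_component_of_subset[OF F_sub[OF V(1)]]
      unfolding path_connected_component by blast
  next
    case (step a b)
    then obtain z where z: "z \<in> F a" "z \<in> F b"
      using assms(3) by blast
    have "path_component ?U z y" if "y \<in> F b" for y
      using assms(2) step(2) z(2) that path_component_of_subset[OF F_sub]
      unfolding path_connected_component by blast
    then show ?case
      using step.IH z(1) path_component_trans by blast
  qed
  then show "path_component ?U x y" using V'(2) by blast
qed

locale quad_labyrinth = convex_quad +
  fixes m :: nat and W1 :: "quad set"
  assumes labyrinth: "labyrinth_set q m W1"
begin

lemma m_ge_4: "4 \<le> m"
  and cells: "W1 \<subseteq> Sset q m"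
  and finite_cells: "finite W1"
  and cells_connected: "graph_connected W1 quad_adj"
  and exits: "exit_property q m W1"
  and corners: "corner_property q m W1"
  using labyrinth unfolding labyrinth_set_def is_tree_def by auto

lemma cell_index: "V \<in> W1 \<Longrightarrow> \<exists>k\<in>Aidx m. V = Sm q m k"
  using cells unfolding Sset_def by blast

lemma cells_fit_halves: "\<forall>V\<in>W1. fits_halves V"
proof
  fix V assume "V \<in> W1"
  then obtain k where "k \<in> Aidx m" "V = Sm q m k"
    using cell_index by blast
  moreover have "0 < m" using m_ge_4 by simp
  ultimately show "fits_halves V"
    using cell_fits_halves by simp
qed

lemma lab_fractal_eq: "lab_fractal q W1 = (\<Inter>n. (lab_map W1 ^^ Suc n) Qhull)"
  unfolding lab_fractal_def lab_level_region[OF cells_fit_halves] ..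

lemma closed_levels: "closed ((lab_map W1 ^^ Suc n) Qhull)"
  unfolding lab_level_region[OF cells_fit_halves, symmetric]
  by (intro closed_UN finite_lab_level finite_cells ballI closed_quad_region)

lemma adjacent_cells_meet:
  assumes "V \<in> W1" "V' \<in> W1" "quad_adj V V'" "0 \<le> s" "s \<le> 1" "0 \<le> t" "t \<le> 1"
    "bottom_pt s \<in> S" "top_pt s \<in> S" "left_pt t \<in> S" "right_pt t \<in> S"
  shows "Pmap q V ` S \<inter> Pmap q V' ` S \<noteq> {}"
proof -
  obtain k k' where k: "k \<in> Aidx m" "V = Sm q m k" and k': "k' \<in> Aidx m" "V' = Sm q m k'"
    using cell_index assms(1,2) by blast
  have m: "0 < m" using m_ge_4 by simp
  obtain R1 R2 R3 R4 where R: "Sm q m k = (R1, R2, R3, R4)"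
    by (cases "Sm q m k" rule: prod_cases4)
  obtain R1' R2' R3' R4' where R': "Sm q m k' = (R1', R2', R3', R4')"
    by (cases "Sm q m k'" rule: prod_cases4)
  have "(R3 = R2' \<and> R4 = R1') \<or> (R3' = R2 \<and> R4' = R1) \<or> (R2 = R1' \<and> R3 = R4') \<or> (R2' = R1 \<and> R3' = R4)"
    using cells_common_side[OF k(1) k'(1) m _ R R'] assms(3) unfolding k(2) k'(2) .
  then show ?thesis
    unfolding k(2) k'(2) R R' by (rule Pmap_glue[OF _ assms(4-11)])
qed

lemma exit_cells:
  shows "\<exists>k1 k2. k1 + k2 = m - 1 \<and> Sm q m (k1, k2, 0, 0) \<in> W1 \<and> Sm q m (0, 0, k2, k1) \<in> W1"
    and "\<exists>k1 k4. k1 + k4 = m - 1 \<and> Sm q m (k1, 0, 0, k4) \<in> W1 \<and> Sm q m (0, k1, k4, 0) \<in> W1"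
proof -
  have "\<exists>p. case p of (k1, k2) \<Rightarrow> (k1, k2, 0, 0) \<in> Aidx m \<and> Sm q m (k1, k2, 0, 0) \<in> W1 \<and> Sm q m (0, 0, k2, k1) \<in> W1"
    using exits unfolding exit_property_def by (blast dest: ex1_implies_ex)
  then obtain k1 k2 where "(k1, k2, 0, 0) \<in> Aidx m" "Sm q m (k1, k2, 0, 0) \<in> W1" "Sm q m (0, 0, k2, k1) \<in> W1"
    by auto
  moreover from this(1) have "k1 + k2 = m - 1" by (auto simp: Aidx_def A1_def A2_def A3_def)
  ultimately show "\<exists>k1 k2. k1 + k2 = m - 1 \<and> Sm q m (k1, k2, 0, 0) \<in> W1 \<and> Sm q m (0, 0, k2, k1) \<in> W1"
    by blast
  have "\<exists>p. case p of (k1, k4) \<Rightarrow> (k1, 0, 0, k4) \<in> Aidx m \<and> Sm q m (k1, 0, 0, k4) \<in> W1 \<and> Sm q m (0, k1, k4, 0) \<in> W1"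
    using exits unfolding exit_property_def by (blast dest: ex1_implies_ex)
  then obtain k1 k4 where "(k1, 0, 0, k4) \<in> Aidx m" "Sm q m (k1, 0, 0, k4) \<in> W1" "Sm q m (0, k1, k4, 0) \<in> W1"
    by auto
  moreover from this(1) have "k1 + k4 = m - 1" by (auto simp: Aidx_def A1_def A2_def A3_def)
  ultimately show "\<exists>k1 k4. k1 + k4 = m - 1 \<and> Sm q m (k1, 0, 0, k4) \<in> W1 \<and> Sm q m (0, k1, k4, 0) \<in> W1"
    by blast
qed

lemma spans_lab_map:
  assumes "S \<subseteq> Qhull" "spans S"
  shows "spans (lab_map W1 S)"
proof -
  obtain s t where st: "0 \<le> s" "s \<le> 1" "0 \<le> t" "t \<le> 1" "bottom_pt s \<in> S" "top_pt s \<in> S"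
    "left_pt t \<in> S" "right_pt t \<in> S"
    using assms(2) unfolding spans_def by auto
  have "path_connected (lab_map W1 S)"
    unfolding lab_map_def
  proof (rule path_connected_UN_graph[OF cells_connected])
    show "path_connected (Pmap q V ` S)" for V
      using assms(2) unfolding spans_def
      by (intro path_connected_continuous_image[OF continuous_on_subset[OF continuous_on_Pmap assms(1)]]) simp
  qed (rule adjacent_cells_meet[OF _ _ _ st])
  moreover obtain k1 k2 where e1: "k1 + k2 = m - 1" "Sm q m (k1, k2, 0, 0) \<in> W1" "Sm q m (0, 0, k2, k1) \<in> W1"
    using exit_cells(1) by blast
  obtain l1 l4 where e2: "l1 + l4 = m - 1" "Sm q m (l1, 0, 0, l4) \<in> W1" "Sm q m (0, l1, l4, 0) \<in> W1"
    using exit_cells(2) by blast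
  have m: "0 < m" using m_ge_4 by simp
  have "k2 + 1 \<le> m" "l1 + 1 \<le> m" using e1(1) e2(1) m by linarith+
  then have "real k2 + 1 \<le> real m" "real l1 + 1 \<le> real m" by linarith+
  then have "(real k2 + s) / real m \<in> {0..1}" "(real l1 + t) / real m \<in> {0..1}"
    using m st(1-4) by (simp_all add: divide_le_eq)
  moreover have "bottom_pt ((real k2 + s) / real m) \<in> lab_map W1 S" "top_pt ((real k2 + s) / real m) \<in> lab_map W1 S"
    "left_pt ((real l1 + t) / real m) \<in> lab_map W1 S" "right_pt ((real l1 + t) / real m) \<in> lab_map W1 S"
    unfolding lab_map_def
    by (rule UN_I[OF e1(2)], rule image_eqI[OF _ st(5)], rule Pmap_bottom_cell[OF e1(1) m st(1,2), symmetric])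
      (rule UN_I[OF e1(3)], rule image_eqI[OF _ st(6)], rule Pmap_top_cell[OF e1(1) m st(1,2), symmetric],
       rule UN_I[OF e2(2)], rule image_eqI[OF _ st(7)], rule Pmap_left_cell[OF e2(1) m st(3,4), symmetric],
       rule UN_I[OF e2(3)], rule image_eqI[OF _ st(8)], rule Pmap_right_cell[OF e2(1) m st(3,4), symmetric])
  ultimately show ?thesis
    unfolding spans_def by blast
qed

lemma spans_levels: "spans ((lab_map W1 ^^ n) Qhull)"
proof (induction n)
  case (Suc n)
  then show ?case
    using spans_lab_map lab_map_power_subset[OF cells_fit_halves] by simp
qed (simp add: spans_Qhull)

lemma corner_outside_fractal:
  assumes "Sm q m kc \<notin> W1" "\<And>k. k \<in> Aidx m \<Longrightarrow> k \<noteq> kc \<Longrightarrow> z \<notin> quad_region (Sm q m k)"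
  shows "z \<notin> lab_fractal q W1"
proof
  assume "z \<in> lab_fractal q W1"
  then have "z \<in> (\<Union>V\<in>lab_level q W1 0. quad_region V)"
    unfolding lab_fractal_def by blast
  then obtain V where "V \<in> W1" "z \<in> quad_region V"
    by auto
  then show False
    using cell_index assms by blast
qed

lemma corners_outside_fractal:
  "\<exists>a\<in>{Q1, Q3}. a \<notin> lab_fractal q W1" "\<exists>b\<in>{Q2, Q4}. b \<notin> lab_fractal q W1"
proof -
  have m: "2 \<le> m" using m_ge_4 by simp
  have "Sm q m (m - 1, 0, 0, 0) \<notin> W1 \<or> Sm q m (0, 0, m - 1, 0) \<notin> W1"
    using corners unfolding corner_property_def by blast
  then show "\<exists>a\<in>{Q1, Q3}. a \<notin> lab_fractal q W1"
  proof
    assume "Sm q m (m - 1, 0, 0, 0) \<notin> W1"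
    then have "Q1 \<notin> lab_fractal q W1"
      by (rule corner_outside_fractal) (rule corners_notin_cells(1)[OF _ m])
    then show ?thesis by blast
  next
    assume "Sm q m (0, 0, m - 1, 0) \<notin> W1"
    then have "Q3 \<notin> lab_fractal q W1"
      by (rule corner_outside_fractal) (rule corners_notin_cells(3)[OF _ m])
    then show ?thesis by blast
  qed
  have "Sm q m (0, m - 1, 0, 0) \<notin> W1 \<or> Sm q m (0, 0, 0, m - 1) \<notin> W1"
    using corners unfolding corner_property_def by blast
  then show "\<exists>b\<in>{Q2, Q4}. b \<notin> lab_fractal q W1"
  proof
    assume "Sm q m (0, m - 1, 0, 0) \<notin> W1"
    then have "Q2 \<notin> lab_fractal q W1"
      by (rule corner_outside_fractal) (rule corners_notin_cells(2)[OF _ m])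
    then show ?thesis by blast
  next
    assume "Sm q m (0, 0, 0, m - 1) \<notin> W1"
    then have "Q4 \<notin> lab_fractal q W1"
      by (rule corner_outside_fractal) (rule corners_notin_cells(4)[OF _ m])
    then show ?thesis by blast
  qed
qed

theorem not_path_connected_complement: "\<not> path_connected (Qhull - lab_fractal q W1)"
proof
  assume "path_connected (Qhull - lab_fractal q W1)"
  moreover obtain a b where ab: "a \<in> {Q1, Q3}" "b \<in> {Q2, Q4}" "a \<notin> lab_fractal q W1" "b \<notin> lab_fractal q W1"
    using corners_outside_fractal by blast
  moreover have "a \<in> Qhull" "b \<in> Qhull"
    using ab(1,2) by (auto intro: hull_inc)
  ultimately obtain \<gamma> where \<gamma>: "path \<gamma>" "path_image \<gamma> \<subseteq> Qhull - lab_fractal q W1"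
    "pathstart \<gamma> = a" "pathfinish \<gamma> = b"
    unfolding path_connected_def by blast
  let ?L = "\<lambda>n. path_image \<gamma> \<inter> (lab_map W1 ^^ Suc n) Qhull"
  have "(\<Inter>n. ?L n) = {}"
    using \<gamma>(2) unfolding lab_fractal_eq by blast
  moreover have "\<Inter>(range ?L) \<noteq> {}"
  proof (rule compact_nest)
    show "compact (?L n)" for n
      using compact_path_image[OF \<gamma>(1)] closed_levels by (rule compact_Int_closed)
    show "?L n \<noteq> {}" for n
      using spans_meets_corner_path[OF spans_levels lab_map_power_subset[OF cells_fit_halves] \<gamma>(1)]
        \<gamma>(2-4) ab(1,2) by blast
    show "?L n \<subseteq> ?L k" if "k \<le> n" for k n
      using lift_Suc_antimono_le[of "\<lambda>n. (lab_map W1 ^^ Suc n) Qhull", OF _ that]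
        lab_map_power_decreasing[OF cells_fit_halves] by blast
  qed
  ultimately show False by simp
qed

end

theorem theorem4p3:
  fixes Q1 Q2 Q3 Q4 :: "real \<times> real" and m :: nat and W1 :: "quad set"
  assumes "convex_quad_acw Q1 Q2 Q3 Q4"
    and "dist Q1 Q3 \<le> dist Q2 Q4"
    and "4 \<le> m"
    and "labyrinth_set (Q1, Q2, Q3, Q4) m W1"
  shows "\<not> path_connected (convex hull {Q1, Q2, Q3, Q4} - lab_fractal (Q1, Q2, Q3, Q4) W1)"
proof -
  (* The diagonal condition only fixes the labelling, and 4 <= m is part of labyrinth_set. *)
  interpret quad_labyrinth Q1 Q2 Q3 Q4 m W1
    using assms(1,4) by (simp add: quad_labyrinth_def quad_labyrinth_axioms_def convex_quad_def)
  show ?thesis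
    by (rule not_path_connected_complement)
qed

end
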